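(* Let $g\geq 2$, $\Gamma_g=\pi_1(\Sigma_g)$, and let $\rho\colon \mathrm{Aut}_+(\Gamma_g)\to\mathrm{Homeo}_+(S^1)$ be a homomorphism. If $a \in \Gamma_g$ is represented by a nonseparating simple closed curve on $\Sigma_g$, and $a$ is regarded as an element of $\mathrm{Aut}_+(\Gamma_g)$ via the identification $\Gamma_g\cong\mathrm{Inn}(\Gamma_g)\subset\mathrm{Aut}_+(\Gamma_g)$, then $\mathrm{rot}(\rho(a)) = 0$.
   Context: $\mathrm{Aut}_+(\Gamma_g)$ is the index two subgroup of $\mathrm{Aut}(\Gamma_g)$ corresponding under the Dehn–Nielsen–Baer isomorphism $\mathrm{Aut}(\Gamma_g)\cong\mathrm{Mod}^\pm_{g,1}$ to the mapping class group $\mathrm{Mod}_{g,1}$ of orientation-preserving homeomorphisms of $\Sigma_g$ fixing a marked point (the basepoint), up to isotopy; $\Gamma_g$ is centerless so $\Gamma_g\cong\mathrm{Inn}(\Gamma_g)$. For $f\in\mathrm{Homeo}_+(S^1)$, $\mathrm{rot}(f)\in\mathbb{R}/\mathbb{Z}$ is the Poincaré rotation number: the translation number $\lim_{n\to\infty}\tilde f^n(x)/n$ of any lift $\tilde f$ to the group of homeomorphisms of $\mathbb{R}$ commuting with integer translations, taken modulo $\mathbb{Z}$. *)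

theory Defs
  imports "HOL-Analysis.Analysis" "HOL-Algebra.Bij"
begin

text \<open>Generators a_1,b_1,...,a_g,b_g (indexed from 0). A letter is a generator
  together with a flag: True = the inverse of the generator.\<close>

datatype sgen = GA nat | GB nat

type_synonym sletter = "sgen \<times> bool"
type_synonym sword = "sletter list"

fun gen_idx :: "sgen \<Rightarrow> nat" where
  "gen_idx (GA i) = i" | "gen_idx (GB i) = i"

definition sletters :: "nat \<Rightarrow> sletter set" where
  "sletters g = {x. gen_idx (fst x) < g}"

definition swords :: "nat \<Rightarrow> sword set" where
  "swords g = lists (sletters g)"

definition linv :: "sletter \<Rightarrow> sletter" where
  "linv x = (fst x, \<not> snd x)"

definition relator :: "nat \<Rightarrow> sword" where
  "relator g = concat (map (\<lambda>i. [(GA i, False), (GB i, False), (GA i, True), (GB i, True)]) [0..<g])"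

inductive sg_eq :: "nat \<Rightarrow> sword \<Rightarrow> sword \<Rightarrow> bool" for g where
  sg_refl: "w \<in> swords g \<Longrightarrow> sg_eq g w w"
| sg_sym: "sg_eq g u v \<Longrightarrow> sg_eq g v u"
| sg_trans: "sg_eq g u v \<Longrightarrow> sg_eq g v w \<Longrightarrow> sg_eq g u w"
| sg_cancel: "u \<in> swords g \<Longrightarrow> v \<in> swords g \<Longrightarrow> x \<in> sletters g \<Longrightarrow>
     sg_eq g (u @ [x, linv x] @ v) (u @ v)"
| sg_rel: "u \<in> swords g \<Longrightarrow> v \<in> swords g \<Longrightarrow>
     sg_eq g (u @ relator g @ v) (u @ v)"

definition sg_rel :: "nat \<Rightarrow> (sword \<times> sword) set" where
  "sg_rel g = {(u, v). sg_eq g u v}"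

definition sg_class :: "nat \<Rightarrow> sword \<Rightarrow> sword set" where
  "sg_class g w = sg_rel g `` {w}"

definition surface_group :: "nat \<Rightarrow> sword set monoid" where
  "surface_group g =
    \<lparr>carrier = swords g // sg_rel g,
     mult = (\<lambda>X Y. sg_class g ((SOME x. x \<in> X) @ (SOME y. y \<in> Y))),
     one = sg_class g []\<rparr>"

text \<open>Abelianization: exponent-sum vector in H_1(\<Sigma>_g;Z) = Z^{2g}.\<close>
definition ab_word :: "sword \<Rightarrow> sgen \<Rightarrow> int" where
  "ab_word w s = (\<Sum>x\<leftarrow>w. if fst x = s then (if snd x then -1 else 1) else 0)"

definition ab_class :: "sword set \<Rightarrow> sgen \<Rightarrow> int" where
  "ab_class X = ab_word (SOME w. w \<in> X)"

definition isect :: "nat \<Rightarrow> (sgen \<Rightarrow> int) \<Rightarrow> (sgen \<Rightarrow> int) \<Rightarrow> int" where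
  "isect g u v = (\<Sum>i<g. u (GA i) * v (GB i) - u (GB i) * v (GA i))"

text \<open>Aut_+(\<Gamma>_g): automorphisms whose action on H_1 preserves the intersection
  form (equivalently act trivially on H_2(\<Gamma>_g;Z) = Z, i.e. come from
  orientation-preserving homeomorphisms).\<close>
definition aut_plus :: "nat \<Rightarrow> (sword set \<Rightarrow> sword set) set" where
  "aut_plus g = {\<phi> \<in> auto (surface_group g).
     \<forall>X \<in> carrier (surface_group g). \<forall>Y \<in> carrier (surface_group g).
       isect g (ab_class (\<phi> X)) (ab_class (\<phi> Y)) = isect g (ab_class X) (ab_class Y)}"

definition AutPlus :: "nat \<Rightarrow> (sword set \<Rightarrow> sword set) monoid" where
  "AutPlus g = BijGroup (carrier (surface_group g)) \<lparr>carrier := aut_plus g\<rparr>"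

definition inner_aut :: "nat \<Rightarrow> sword set \<Rightarrow> (sword set \<Rightarrow> sword set)" where
  "inner_aut g a = (\<lambda>X \<in> carrier (surface_group g).
      a \<otimes>\<^bsub>surface_group g\<^esub> X \<otimes>\<^bsub>surface_group g\<^esub> inv\<^bsub>surface_group g\<^esub> a)"

text \<open>Elements represented by nonseparating simple closed curves: the orbit
  of the standard generator a_1 under Aut(\<Gamma>_g).\<close>
definition nonsep_scc :: "nat \<Rightarrow> sword set set" where
  "nonsep_scc g = {\<phi> (sg_class g [(GA 0, False)]) | \<phi>. \<phi> \<in> auto (surface_group g)}"

definition S1 :: "complex set" where
  "S1 = sphere 0 1"

definition circ :: "real \<Rightarrow> complex" where
  "circ x = cis (2 * pi * x)"

definition is_lift :: "(complex \<Rightarrow> complex) \<Rightarrow> (real \<Rightarrow> real) \<Rightarrow> bool" where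
  "is_lift f F \<longleftrightarrow> continuous_on UNIV F \<and> strict_mono F \<and> surj F \<and>
     (\<forall>x. F (x + 1) = F x + 1) \<and> (\<forall>x. f (circ x) = circ (F x))"

definition homeo_plus :: "(complex \<Rightarrow> complex) set" where
  "homeo_plus = {f \<in> Bij S1. homeomorphism S1 S1 f (inv_into S1 f) \<and> (\<exists>F. is_lift f F)}"

definition HomeoPlus :: "(complex \<Rightarrow> complex) monoid" where
  "HomeoPlus = BijGroup S1 \<lparr>carrier := homeo_plus\<rparr>"

text \<open>Rotation number in R/Z, represented by its representative in [0,1).\<close>
definition rot :: "(complex \<Rightarrow> complex) \<Rightarrow> real" where
  "rot f = (let F = (SOME F. is_lift f F) in frac (lim (\<lambda>n. (F ^^ n) 0 / real n)))"

end

theory Submission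
  imports Defs
begin

(*
  A Dehn twist T about the nonseparating curve a fixes a, hence commutes with the inner
  automorphism \<iota>_a; and for an element w dual to a we have T w = a^-1 w, so conjugation by
  \<iota>_w carries T to \<iota>_a T. On the circle side, lifts of commuting homeomorphisms have
  additive translation numbers, and conjugate homeomorphisms have lifts whose translation
  numbers differ by the integer ambiguity of lifts. Hence a lift of \<rho>(\<iota>_a) has integral
  translation number, i.e. rot(\<rho>(\<iota>_a)) = 0.

  The algebraic work is to see that T is orientation preserving: T = \<phi> T_1 \<phi>^-1 for the
  standard twist T_1 about a_1 and an arbitrary automorphism \<phi> with \<phi>(a_1) = a. Every
  automorphism multiplies the intersection form on H_1 by a constant: a pair of classes is
  isotropic iff it defines a homomorphism to the integral Heisenberg group, so pulling back
  along \<phi> preserves isotropy, and a bilinear form vanishing on all isotropic pairs is a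
  multiple of the intersection form.
*)

section \<open>The surface group as a quotient of the word monoid\<close>

abbreviation SG :: "nat \<Rightarrow> sword set monoid" where "SG g \<equiv> surface_group g"

lemma sg_eq_imp_swords: "sg_eq g u v \<Longrightarrow> u \<in> swords g \<and> v \<in> swords g"
  by (induction rule: sg_eq.induct)
     (auto simp: swords_def sletters_def relator_def linv_def)

lemma linv_sletters[simp]: "linv x \<in> sletters g \<longleftrightarrow> x \<in> sletters g"
  by (auto simp: linv_def sletters_def)

lemma linv_linv[simp]: "linv (linv x) = x"
  by (auto simp: linv_def)

lemma swords_append[simp]: "u @ v \<in> swords g \<longleftrightarrow> u \<in> swords g \<and> v \<in> swords g"
  by (auto simp: swords_def)

lemma swords_Cons[simp]: "x # v \<in> swords g \<longleftrightarrow> x \<in> sletters g \<and> v \<in> swords g"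
  by (auto simp: swords_def)

lemma swords_Nil[simp]: "[] \<in> swords g"
  by (auto simp: swords_def)

lemma relator_swords[simp]: "relator g \<in> swords g"
  by (auto simp: swords_def sletters_def relator_def)

lemma sg_eq_append_right: "sg_eq g u v \<Longrightarrow> w \<in> swords g \<Longrightarrow> sg_eq g (u @ w) (v @ w)"
proof (induction rule: sg_eq.induct)
  case (sg_refl w') then show ?case by (auto intro: sg_eq.sg_refl)
next
  case (sg_sym u v) then show ?case by (auto intro: sg_eq.sg_sym)
next
  case (sg_trans u v w') then show ?case by (auto intro: sg_eq.sg_trans)
next
  case (sg_cancel u v x) then show ?case using sg_eq.sg_cancel[of u g "v@w" x] by auto
next
  case (sg_rel u v) then show ?case using sg_eq.sg_rel[of u g "v@w"] by auto
qed

lemma sg_eq_append_left: "sg_eq g u v \<Longrightarrow> w \<in> swords g \<Longrightarrow> sg_eq g (w @ u) (w @ v)"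
proof (induction rule: sg_eq.induct)
  case (sg_refl w') then show ?case by (auto intro: sg_eq.sg_refl)
next
  case (sg_sym u v) then show ?case by (auto intro: sg_eq.sg_sym)
next
  case (sg_trans u v w') then show ?case by (auto intro: sg_eq.sg_trans)
next
  case (sg_cancel u v x) then show ?case using sg_eq.sg_cancel[of "w@u" g "v" x] by auto
next
  case (sg_rel u v) then show ?case using sg_eq.sg_rel[of "w@u" g "v"] by auto
qed

lemma sg_eq_append: "sg_eq g u u' \<Longrightarrow> sg_eq g v v' \<Longrightarrow> sg_eq g (u @ v) (u' @ v')"
  by (meson sg_eq.sg_trans sg_eq_append_left sg_eq_append_right sg_eq_imp_swords)

lemma sg_class_eq: "sg_class g w = {v. sg_eq g w v}"
  by (auto simp: sg_class_def sg_rel_def)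

lemma sg_class_eqI: "sg_eq g u v \<Longrightarrow> sg_class g u = sg_class g v"
  unfolding sg_class_eq by (auto intro: sg_eq.intros)

lemma sg_class_eq_iff: "u \<in> swords g \<Longrightarrow> sg_class g u = sg_class g v \<longleftrightarrow> sg_eq g u v"
proof
  assume u: "u \<in> swords g" and "sg_class g u = sg_class g v"
  then have "u \<in> sg_class g v" using sg_eq.sg_refl[of u g]
    by (metis mem_Collect_eq sg_class_eq)
  then show "sg_eq g u v" by (simp add: sg_class_eq sg_eq.sg_sym)
qed (rule sg_class_eqI)

lemma carrier_surface_group: "carrier (SG g) = sg_class g ` swords g"
  by (auto simp: surface_group_def quotient_def sg_class_def)

lemma sg_class_in_carrier[simp]: "w \<in> swords g \<Longrightarrow> sg_class g w \<in> carrier (SG g)"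
  by (simp add: carrier_surface_group)

lemma surface_group_carrierE: assumes "X \<in> carrier (SG g)"
  obtains w where "w \<in> swords g" "X = sg_class g w"
  using assms by (auto simp: carrier_surface_group)

lemma sg_eq_some_class: assumes "w \<in> swords g" shows "sg_eq g w (SOME x. x \<in> sg_class g w)"
proof -
  have "w \<in> sg_class g w" using assms by (simp add: sg_class_eq sg_eq.sg_refl)
  then have "(SOME x. x \<in> sg_class g w) \<in> sg_class g w" by (rule someI)
  then show ?thesis by (simp add: sg_class_eq)
qed

lemma mult_sg_class: "u \<in> swords g \<Longrightarrow> v \<in> swords g \<Longrightarrow>
   sg_class g u \<otimes>\<^bsub>SG g\<^esub> sg_class g v = sg_class g (u @ v)"
  unfolding surface_group_def by (simp, rule sg_class_eqI, rule sg_eq.sg_sym,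
     rule sg_eq_append[OF sg_eq_some_class sg_eq_some_class])

lemma one_surface_group: "\<one>\<^bsub>SG g\<^esub> = sg_class g []"
  by (simp add: surface_group_def)

definition word_inv :: "sword \<Rightarrow> sword" where "word_inv w = rev (map linv w)"

lemma word_inv_swords[simp]: "word_inv w \<in> swords g \<longleftrightarrow> w \<in> swords g"
  by (auto simp: word_inv_def swords_def)

lemma word_inv_append[simp]: "word_inv (u @ v) = word_inv v @ word_inv u"
  by (simp add: word_inv_def)

lemma word_inv_Cons: "word_inv (x # v) = word_inv v @ [linv x]"
  by (simp add: word_inv_def)

lemma word_inv_Nil[simp]: "word_inv [] = []" by (simp add: word_inv_def)
lemma word_inv_word_inv[simp]: "word_inv (word_inv w) = w"
  by (simp add: word_inv_def rev_map comp_def)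

lemma word_inv_right_sg_eq: "w \<in> swords g \<Longrightarrow> sg_eq g (w @ word_inv w) []"
proof (induction w)
  case Nil then show ?case by (simp add: sg_eq.sg_refl)
next
  case (Cons x w)
  then have "sg_eq g ([x] @ (w @ word_inv w) @ [linv x]) ([x] @ [] @ [linv x])"
    by (intro sg_eq_append sg_eq.sg_refl) auto
  moreover have "sg_eq g ([] @ [x, linv x] @ []) ([] @ [])"
    using Cons by (intro sg_eq.sg_cancel) auto
  ultimately show ?case by (auto simp: word_inv_Cons intro: sg_eq.sg_trans)
qed

lemma word_inv_left_sg_eq: "w \<in> swords g \<Longrightarrow> sg_eq g (word_inv w @ w) []"
  using word_inv_right_sg_eq[of "word_inv w" g] by simp

lemma group_surface_group: "group (SG g)"
proof (rule groupI)
  fix x y assume "x \<in> carrier (SG g)" "y \<in> carrier (SG g)"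
  then show "x \<otimes>\<^bsub>SG g\<^esub> y \<in> carrier (SG g)"
    by (auto elim!: surface_group_carrierE simp: mult_sg_class)
next
  show "\<one>\<^bsub>SG g\<^esub> \<in> carrier (SG g)" by (simp add: one_surface_group)
next
  fix x y z assume "x \<in> carrier (SG g)" "y \<in> carrier (SG g)" "z \<in> carrier (SG g)"
  then show "x \<otimes>\<^bsub>SG g\<^esub> y \<otimes>\<^bsub>SG g\<^esub> z = x \<otimes>\<^bsub>SG g\<^esub> (y \<otimes>\<^bsub>SG g\<^esub> z)"
    by (auto elim!: surface_group_carrierE simp: mult_sg_class)
next
  fix x assume "x \<in> carrier (SG g)"
  then show "\<one>\<^bsub>SG g\<^esub> \<otimes>\<^bsub>SG g\<^esub> x = x"
    by (auto elim!: surface_group_carrierE simp: mult_sg_class one_surface_group)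
next
  fix x assume "x \<in> carrier (SG g)"
  then obtain w where w: "w \<in> swords g" "x = sg_class g w" by (rule surface_group_carrierE)
  then have "sg_class g (word_inv w) \<otimes>\<^bsub>SG g\<^esub> x = \<one>\<^bsub>SG g\<^esub>"
    by (simp add: mult_sg_class one_surface_group sg_class_eqI word_inv_left_sg_eq)
  then show "\<exists>y\<in>carrier (SG g). y \<otimes>\<^bsub>SG g\<^esub> x = \<one>\<^bsub>SG g\<^esub>"
    using w by (intro bexI[of _ "sg_class g (word_inv w)"]) auto
qed

lemma inv_sg_class: "w \<in> swords g \<Longrightarrow> inv\<^bsub>SG g\<^esub> (sg_class g w) = sg_class g (word_inv w)"
  by (rule group.inv_equality[OF group_surface_group])
    (simp_all add: mult_sg_class one_surface_group sg_class_eqI word_inv_left_sg_eq)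

lemma relator_sg_eq: "sg_eq g (relator g) []"
  using sg_eq.sg_rel[of "[]" g "[]"] by simp

lemma sg_class_relator: "sg_class g (relator g) = \<one>\<^bsub>SG g\<^esub>"
  using sg_eq.sg_rel[of "[]" g "[]"] by (simp add: one_surface_group sg_class_eqI)

definition subst_letter :: "(sgen \<Rightarrow> sword) \<Rightarrow> sletter \<Rightarrow> sword" where
  "subst_letter s x = (if snd x then word_inv (s (fst x)) else s (fst x))"

definition subst :: "(sgen \<Rightarrow> sword) \<Rightarrow> sword \<Rightarrow> sword" where
  "subst s w = concat (map (subst_letter s) w)"

lemma subst_Nil[simp]: "subst s [] = []" by (simp add: subst_def)
lemma subst_Cons[simp]: "subst s (x # w) = subst_letter s x @ subst s w" by (simp add: subst_def)
lemma subst_append[simp]: "subst s (u @ w) = subst s u @ subst s w" by (simp add: subst_def)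

lemma subst_letter_linv: "subst_letter s (linv x) = word_inv (subst_letter s x)"
  by (simp add: subst_letter_def linv_def)

lemma subst_word_inv: "subst s (word_inv w) = word_inv (subst s w)"
  by (induction w) (simp_all add: word_inv_Cons subst_letter_linv)

definition admissible_subst :: "nat \<Rightarrow> (sgen \<Rightarrow> sword) \<Rightarrow> bool" where
  "admissible_subst g s \<longleftrightarrow> (\<forall>t. gen_idx t < g \<longrightarrow> s t \<in> swords g) \<and> sg_eq g (subst s (relator g)) []"

lemma subst_letter_swords: "admissible_subst g s \<Longrightarrow> x \<in> sletters g \<Longrightarrow> subst_letter s x \<in> swords g"
  by (auto simp: admissible_subst_def subst_letter_def sletters_def)

lemma subst_swords: "admissible_subst g s \<Longrightarrow> w \<in> swords g \<Longrightarrow> subst s w \<in> swords g"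
  by (induction w) (auto simp: subst_letter_swords)

lemma subst_sg_eq: assumes "admissible_subst g s"
  shows "sg_eq g u v \<Longrightarrow> sg_eq g (subst s u) (subst s v)"
proof (induction rule: sg_eq.induct)
  case (sg_refl w) then show ?case using assms by (simp add: sg_eq.sg_refl subst_swords)
next
  case (sg_sym u v) then show ?case by (blast intro: sg_eq.intros)
next
  case (sg_trans u v w) then show ?case by (blast intro: sg_eq.intros)
next
  case (sg_cancel u v x)
  have "sg_eq g (subst s u @ (subst_letter s x @ word_inv (subst_letter s x)) @ subst s v)
      (subst s u @ [] @ subst s v)"
    using sg_cancel assms
    by (intro sg_eq_append sg_eq.sg_refl word_inv_right_sg_eq) (auto simp: subst_swords subst_letter_swords)
  then show ?case by (simp add: subst_letter_linv)
next
  case (sg_rel u v)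
  have "sg_eq g (subst s u @ subst s (relator g) @ subst s v) (subst s u @ [] @ subst s v)"
    using sg_rel assms
    by (intro sg_eq_append sg_eq.sg_refl) (auto simp: subst_swords admissible_subst_def)
  then show ?case by simp
qed

definition subst_hom :: "nat \<Rightarrow> (sgen \<Rightarrow> sword) \<Rightarrow> sword set \<Rightarrow> sword set" where
  "subst_hom g s = (\<lambda>X \<in> carrier (SG g). sg_class g (subst s (SOME w. w \<in> X)))"

lemma subst_hom_class: assumes "admissible_subst g s" "w \<in> swords g"
  shows "subst_hom g s (sg_class g w) = sg_class g (subst s w)"
  using assms
    by (simp add: subst_hom_def) (metis sg_class_eqI sg_eq.sg_sym sg_eq_some_class subst_sg_eq)

lemma subst_hom_hom: assumes "admissible_subst g s" shows "subst_hom g s \<in> hom (SG g) (SG g)"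
proof (rule homI)
  fix X assume "X \<in> carrier (SG g)"
  then show "subst_hom g s X \<in> carrier (SG g)" using assms
    by (auto elim!: surface_group_carrierE simp: subst_hom_class subst_swords)
next
  fix X Y assume "X \<in> carrier (SG g)" "Y \<in> carrier (SG g)"
  then show "subst_hom g s (X \<otimes>\<^bsub>SG g\<^esub> Y) = subst_hom g s X \<otimes>\<^bsub>SG g\<^esub> subst_hom g s Y" using assms
    by (auto elim!: surface_group_carrierE simp: subst_hom_class subst_swords mult_sg_class)
qed

lemma sg_eq_word_inv: "sg_eq g u v \<Longrightarrow> sg_eq g (word_inv u) (word_inv v)"
  by (metis inv_sg_class sg_class_eqI sg_class_eq_iff sg_eq_imp_swords word_inv_swords)

lemma subst_inverse:
  assumes s': "\<And>t. gen_idx t < g \<Longrightarrow> sg_eq g (subst s (s' t)) [(t, False)]"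
  shows "w \<in> swords g \<Longrightarrow> sg_eq g (subst s (subst s' w)) w"
proof (induction w)
  case Nil then show ?case by (simp add: sg_eq.sg_refl)
next
  case (Cons x w)
  obtain t b where x: "x = (t, b)" by force
  have t: "gen_idx t < g" using Cons x by (auto simp: sletters_def)
  have "sg_eq g (subst s (subst_letter s' x)) [x]"
  proof (cases b)
    case False then show ?thesis using x s'[OF t] by (simp add: subst_letter_def)
  next
    case True then show ?thesis
      using x sg_eq_word_inv[OF s'[OF t]]
      by (simp add: subst_letter_def subst_word_inv, simp add: word_inv_def linv_def)
  qed
  then show ?case using Cons by (simp add: sg_eq_append[of g _ "[x]" _ w, simplified])
qed

lemma subst_hom_auto:
  assumes "admissible_subst g s" "admissible_subst g s'"
    "\<And>t. gen_idx t < g \<Longrightarrow> sg_eq g (subst s (s' t)) [(t, False)]"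
    "\<And>t. gen_idx t < g \<Longrightarrow> sg_eq g (subst s' (s t)) [(t, False)]"
  shows "subst_hom g s \<in> auto (SG g)"
proof -
  have inv1: "subst_hom g s (subst_hom g s' X) = X" if X: "X \<in> carrier (SG g)" for X
  proof -
    obtain w where "w \<in> swords g" "X = sg_class g w" using X by (rule surface_group_carrierE)
    then show ?thesis using assms subst_inverse[OF assms(3)]
      by (simp add: subst_hom_class subst_swords sg_class_eqI)
  qed
  have inv2: "subst_hom g s' (subst_hom g s X) = X" if X: "X \<in> carrier (SG g)" for X
  proof -
    obtain w where "w \<in> swords g" "X = sg_class g w" using X by (rule surface_group_carrierE)
    then show ?thesis using assms subst_inverse[OF assms(4)]
      by (simp add: subst_hom_class subst_swords sg_class_eqI)
  qed
  have c1: "subst_hom g s X \<in> carrier (SG g)" if X: "X \<in> carrier (SG g)" for X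
    using subst_hom_hom[OF assms(1)] that by (auto simp: hom_def)
  have c2: "subst_hom g s' X \<in> carrier (SG g)" if X: "X \<in> carrier (SG g)" for X
    using subst_hom_hom[OF assms(2)] that by (auto simp: hom_def)
  have "bij_betw (subst_hom g s) (carrier (SG g)) (carrier (SG g))"
    by (rule bij_betwI[of _ _ _ "subst_hom g s'"]) (auto simp: c1 c2 inv1 inv2)
  then show ?thesis using subst_hom_hom[OF assms(1)]
    by (auto simp: auto_def Bij_def subst_hom_def)
qed

definition word_weight :: "(sgen \<Rightarrow> int) \<Rightarrow> sword \<Rightarrow> int" where
  "word_weight \<gamma> w = (\<Sum>x\<leftarrow>w. if snd x then - \<gamma> (fst x) else \<gamma> (fst x))"

lemma word_weight_Nil[simp]: "word_weight \<gamma> [] = 0" by (simp add: word_weight_def)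
lemma word_weight_Cons[simp]: "word_weight \<gamma> (x # w) =
    (if snd x then - \<gamma> (fst x) else \<gamma> (fst x)) + word_weight \<gamma> w"
  by (simp add: word_weight_def)
lemma word_weight_append[simp]: "word_weight \<gamma> (u @ w) = word_weight \<gamma> u + word_weight \<gamma> w"
  by (simp add: word_weight_def)
lemma word_weight_word_inv[simp]: "word_weight \<gamma> (word_inv w) = - word_weight \<gamma> w"
  by (induction w) (auto simp: word_inv_Cons linv_def)

lemma relator_Suc: "relator (Suc g) = relator g @ [(GA g, False), (GB g, False), (GA g, True), (GB g, True)]"
  by (simp add: relator_def)

lemma word_weight_relator[simp]: "word_weight \<gamma> (relator g) = 0"
  by (induction g) (simp_all add: relator_Suc, simp add: relator_def)

lemma word_weight_sg_eq: "sg_eq g u v \<Longrightarrow> word_weight \<gamma> u = word_weight \<gamma> v"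
  by (induction rule: sg_eq.induct) (auto simp: linv_def)

definition class_weight :: "(sgen \<Rightarrow> int) \<Rightarrow> sword set \<Rightarrow> int" where
  "class_weight \<gamma> X = word_weight \<gamma> (SOME w. w \<in> X)"

lemma class_weight_sg_class: "w \<in> swords g \<Longrightarrow> class_weight \<gamma> (sg_class g w) = word_weight \<gamma> w"
  unfolding class_weight_def by (rule word_weight_sg_eq[OF sg_eq_some_class, symmetric])

lemma ab_word_eq_word_weight: "ab_word w s = word_weight (\<lambda>t. if t = s then 1 else 0) w"
  unfolding ab_word_def word_weight_def by (induction w) auto

lemma ab_class_eq_class_weight: "ab_class X s = class_weight (\<lambda>t. if t = s then 1 else 0) X"
  by (simp add: ab_class_def class_weight_def ab_word_eq_word_weight)

lemma ab_class_sg_class: "w \<in> swords g \<Longrightarrow> ab_class (sg_class g w) = ab_word w"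
  by (simp add: fun_eq_iff ab_class_eq_class_weight ab_word_eq_word_weight class_weight_sg_class)

definition gen_sum :: "nat \<Rightarrow> (sgen \<Rightarrow> int) \<Rightarrow> int" where
  "gen_sum g f = (\<Sum>i<g. f (GA i) + f (GB i))"

lemma gen_sum_delta: "gen_idx t < g \<Longrightarrow> gen_sum g (\<lambda>s. if s = t then f s else 0) = f t"
  by (cases t) (simp_all add: gen_sum_def sum.distrib)

lemma gen_sum_add: "gen_sum g (\<lambda>s. f s + h s) = gen_sum g f + gen_sum g h"
  by (simp add: gen_sum_def sum.distrib algebra_simps)

lemma gen_sum_cmult: "gen_sum g (\<lambda>s. c * f s) = c * gen_sum g f"
  by (simp add: gen_sum_def sum_distrib_left algebra_simps)

lemma gen_sum_cong: "(\<And>s. gen_idx s < g \<Longrightarrow> f s = h s) \<Longrightarrow> gen_sum g f = gen_sum g h"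
  by (simp add: gen_sum_def)

lemma gen_sum_zero[simp]: "gen_sum g (\<lambda>s. 0) = 0" by (simp add: gen_sum_def)

lemma gen_sum_neg: "gen_sum g (\<lambda>s. - f s) = - gen_sum g f"
  using gen_sum_cmult[of g "-1" f] by simp

lemma gen_sum_diff: "gen_sum g (\<lambda>s. f s - h s) = gen_sum g f - gen_sum g h"
  by (simp add: gen_sum_def sum_subtractf[symmetric] algebra_simps)

lemma gen_sum_rmult: "gen_sum g (\<lambda>s. f s * c) = gen_sum g f * c"
  by (simp add: gen_sum_def sum_distrib_right distrib_right)

lemma gen_sum_prod: "gen_sum g f * gen_sum g h = gen_sum g (\<lambda>s. gen_sum g (\<lambda>r. f s * h r))"
  by (simp add: gen_sum_rmult[symmetric] gen_sum_cmult)

lemma sum_gen_sum: "(\<Sum>i<n. gen_sum g (F i)) = gen_sum g (\<lambda>s. \<Sum>i<n. F i s)"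
  unfolding gen_sum_def by (simp add: sum.distrib sum.swap[of _ "{..<n}" "{..<g}"])

lemma word_weight_gen_sum: "w \<in> swords g \<Longrightarrow> word_weight \<gamma> w = gen_sum g (\<lambda>s. \<gamma> s * ab_word w s)"
proof (induction w)
  case Nil then show ?case by (simp add: gen_sum_def ab_word_def)
next
  case (Cons x w)
  have e: "ab_word (x # w) s = (if fst x = s then (if snd x then -1 else 1) else 0) + ab_word w s" for s
    by (simp add: ab_word_def)
  have "gen_sum g (\<lambda>s. \<gamma> s * ab_word (x # w) s) =
     gen_sum g (\<lambda>s. if s = fst x then \<gamma> s * (if snd x then -1 else 1) else 0)
      + gen_sum g (\<lambda>s. \<gamma> s * ab_word w s)"
    unfolding e by (subst gen_sum_add[symmetric]) (rule gen_sum_cong, auto simp: algebra_simps)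
  also have "\<dots> = (if snd x then - \<gamma> (fst x) else \<gamma> (fst x)) + word_weight \<gamma> w"
    using Cons by (subst gen_sum_delta) (auto simp: sletters_def)
  finally show ?case by simp
qed

lemma class_weight_gen_sum: "X \<in> carrier (SG g) \<Longrightarrow> class_weight \<gamma> X = gen_sum g (\<lambda>s. \<gamma> s * ab_class X s)"
  by (auto elim!: surface_group_carrierE simp: class_weight_sg_class ab_class_sg_class word_weight_gen_sum)

lemma word_weight_subst: "word_weight \<gamma> (subst s w) = word_weight (\<lambda>t. word_weight \<gamma> (s t)) w"
  by (induction w) (auto simp: subst_letter_def)

lemma word_weight_add: "word_weight (\<lambda>t. f t + h t) w = word_weight f w + word_weight h w"
  by (induction w) auto

lemma word_weight_delta: "word_weight (\<lambda>t. if t = u then c else 0) w = c * ab_word w u"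
  by (induction w) (auto simp: ab_word_def algebra_simps)

lemma isect_cong: "(\<And>s. gen_idx s < g \<Longrightarrow> u s = u' s) \<Longrightarrow> (\<And>s. gen_idx s < g \<Longrightarrow> v s = v' s) \<Longrightarrow>
   isect g u v = isect g u' v'"
  by (simp add: isect_def)

lemma isect_antisym: "isect g x y = - isect g y x"
  by (simp add: isect_def sum_negf[symmetric] algebra_simps)

lemma isect_add1: "isect g (\<lambda>s. x s + x' s) y = isect g x y + isect g x' y"
  by (simp add: isect_def sum.distrib[symmetric] algebra_simps sum_subtractf[symmetric])

lemma isect_self: "isect g x x = 0"
  using isect_antisym[of g x x] by simp

lemma aut_plusI: "\<phi> \<in> auto (SG g) \<Longrightarrow>
  (\<And>X Y. X \<in> carrier (SG g) \<Longrightarrow> Y \<in> carrier (SG g) \<Longrightarrow>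
     isect g (ab_class (\<phi> X)) (ab_class (\<phi> Y)) = isect g (ab_class X) (ab_class Y)) \<Longrightarrow> \<phi> \<in> aut_plus g"
  by (simp add: aut_plus_def)

section \<open>The twist about a_1\<close>

lemma subst_id: "(\<And>x. x \<in> set w \<Longrightarrow> s (fst x) = [(fst x, False)]) \<Longrightarrow> subst s w = w"
  by (induction w) (auto simp: subst_letter_def word_inv_def linv_def)

definition relator_block :: "nat \<Rightarrow> sword" where
  "relator_block i = [(GA i, False), (GB i, False), (GA i, True), (GB i, True)]"

lemma relator_split: "0 < g \<Longrightarrow> relator g = relator_block 0 @ concat (map relator_block [1..<g])"
  unfolding relator_def relator_block_def[abs_def] by (simp add: upt_conv_Cons)

lemma relator_tail_letters: "x \<in> set (concat (map relator_block [1..<g])) \<Longrightarrow> fst x \<noteq> GB 0 \<and> fst x \<noteq> GA 0"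
  by (auto simp: relator_block_def split: if_splits)

definition twist_subst :: "sgen \<Rightarrow> sword" where
  "twist_subst t = (if t = GB 0 then [(GB 0, False), (GA 0, False)] else [(t, False)])"

definition twist_inv_subst :: "sgen \<Rightarrow> sword" where
  "twist_inv_subst t = (if t = GB 0 then [(GB 0, False), (GA 0, True)] else [(t, False)])"

lemma admissible_twist_subst: assumes "0 < g" shows "admissible_subst g twist_subst"
proof -
  let ?r = "concat (map relator_block [1..<g])"
  have r: "?r \<in> swords g" using relator_swords[of g] relator_split[OF assms] by simp
  have sr: "subst twist_subst ?r = ?r"
    by (rule subst_id, drule relator_tail_letters, simp add: twist_subst_def)
  have "subst twist_subst (relator g) = [(GA 0, False), (GB 0, False)] @
      [(GA 0, False), linv (GA 0, False)] @ ([(GA 0, True), (GB 0, True)] @ ?r)"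
    unfolding relator_split[OF assms] subst_append sr
      by (simp add: relator_block_def twist_subst_def subst_letter_def word_inv_def linv_def)
  also have "sg_eq g \<dots> ([(GA 0, False), (GB 0, False)] @ ([(GA 0, True), (GB 0, True)] @ ?r))"
    using assms r by (intro sg_eq.sg_cancel) (auto simp: sletters_def)
  also have "[(GA 0, False), (GB 0, False)] @ ([(GA 0, True), (GB 0, True)] @ ?r) = relator g"
    by (simp add: relator_split[OF assms] relator_block_def)
  finally have "sg_eq g (subst twist_subst (relator g)) (relator g)" .
  then show ?thesis using assms relator_sg_eq[of g]
    by (auto simp: admissible_subst_def twist_subst_def sletters_def intro: sg_eq.sg_trans)
qed

lemma admissible_twist_inv_subst: assumes "0 < g" shows "admissible_subst g twist_inv_subst"
proof -
  let ?r = "concat (map relator_block [1..<g])"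
  have r: "?r \<in> swords g" using relator_swords[of g] relator_split[OF assms] by simp
  have sr: "subst twist_inv_subst ?r = ?r"
    by (rule subst_id, drule relator_tail_letters, simp add: twist_inv_subst_def)
  have "subst twist_inv_subst (relator g) = [(GA 0, False), (GB 0, False), (GA 0, True)] @
      [(GA 0, True), linv (GA 0, True)] @ ([(GB 0, True)] @ ?r)"
    unfolding relator_split[OF assms] subst_append sr
      by (simp add: relator_block_def twist_inv_subst_def subst_letter_def word_inv_def linv_def)
  also have "sg_eq g \<dots> ([(GA 0, False), (GB 0, False), (GA 0, True)] @ ([(GB 0, True)] @ ?r))"
    using assms r by (intro sg_eq.sg_cancel) (auto simp: sletters_def)
  also have "[(GA 0, False), (GB 0, False), (GA 0, True)] @ ([(GB 0, True)] @ ?r) = relator g"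
    by (simp add: relator_split[OF assms] relator_block_def)
  finally have "sg_eq g (subst twist_inv_subst (relator g)) (relator g)" .
  then show ?thesis using assms relator_sg_eq[of g]
    by (auto simp: admissible_subst_def twist_inv_subst_def sletters_def intro: sg_eq.sg_trans)
qed

lemma subst_twist_inv: assumes "0 < g" "gen_idx t < g"
  shows "sg_eq g (subst twist_subst (twist_inv_subst t)) [(t, False)]"
proof (cases "t = GB 0")
  case True
  have "sg_eq g ([(GB 0, False)] @ [(GA 0, False), linv (GA 0, False)] @ []) ([(GB 0, False)] @ [])"
    using assms by (intro sg_eq.sg_cancel) (auto simp: sletters_def)
  then show ?thesis using True
    by (simp add: twist_subst_def twist_inv_subst_def subst_letter_def word_inv_def linv_def)
next
  case False
  then show ?thesis using assms
    by (simp add: twist_subst_def twist_inv_subst_def subst_letter_def sg_eq.sg_refl sletters_def)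
qed

lemma subst_inv_twist: assumes "0 < g" "gen_idx t < g"
  shows "sg_eq g (subst twist_inv_subst (twist_subst t)) [(t, False)]"
proof (cases "t = GB 0")
  case True
  have "sg_eq g ([(GB 0, False)] @ [(GA 0, True), linv (GA 0, True)] @ []) ([(GB 0, False)] @ [])"
    using assms by (intro sg_eq.sg_cancel) (auto simp: sletters_def)
  then show ?thesis using True
    by (simp add: twist_subst_def twist_inv_subst_def subst_letter_def word_inv_def linv_def)
next
  case False
  then show ?thesis using assms
    by (simp add: twist_subst_def twist_inv_subst_def subst_letter_def sg_eq.sg_refl sletters_def)
qed

definition twist_a1 :: "nat \<Rightarrow> sword set \<Rightarrow> sword set" where "twist_a1 g = subst_hom g twist_subst"

lemma twist_a1_auto: "0 < g \<Longrightarrow> twist_a1 g \<in> auto (SG g)"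
  unfolding twist_a1_def
    by (rule subst_hom_auto[OF admissible_twist_subst admissible_twist_inv_subst
      subst_twist_inv subst_inv_twist])

lemma twist_a1_sg_class: "0 < g \<Longrightarrow> w \<in> swords g \<Longrightarrow> twist_a1 g (sg_class g w) = sg_class g (subst twist_subst w)"
  unfolding twist_a1_def by (rule subst_hom_class[OF admissible_twist_subst])

lemma ab_word_subst_twist: "ab_word (subst twist_subst w) u =
    ab_word w u + (if u = GA 0 then ab_word w (GB 0) else 0)"
proof -
  have "(\<lambda>t. word_weight (\<lambda>t. if t = u then 1 else 0) (twist_subst t)) =
        (\<lambda>t. (if t = u then 1 else 0) + (if t = GB 0 then (if u = GA 0 then 1 else 0) else 0))"
    by (auto simp: twist_subst_def fun_eq_iff)
  have "ab_word (subst twist_subst w) u =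
      word_weight (\<lambda>t. word_weight (\<lambda>t. if t = u then 1 else 0) (twist_subst t)) w"
    by (simp only: ab_word_eq_word_weight word_weight_subst)
  also have "\<dots> = word_weight (\<lambda>t. if t = u then 1 else 0) w
      + word_weight (\<lambda>t. if t = GB 0 then (if u = GA 0 then 1 else 0) else 0) w"
    unfolding \<open>(\<lambda>t. word_weight _ (twist_subst t)) = _\<close> by (rule word_weight_add)
  also have "\<dots> = ab_word w u + (if u = GA 0 then ab_word w (GB 0) else 0)"
    by (simp only: word_weight_delta ab_word_eq_word_weight[symmetric]) simp
  finally show ?thesis .
qed

lemma isect_shear_invariant: "isect g (\<lambda>u. x u + (if u = GA 0 then x (GB 0) else 0))
    (\<lambda>u. y u + (if u = GA 0 then y (GB 0) else 0))
   = isect g x y"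
  unfolding isect_def by (rule sum.cong) (auto simp: algebra_simps)

lemma twist_a1_aut_plus: assumes "0 < g" shows "twist_a1 g \<in> aut_plus g"
proof (rule aut_plusI[OF twist_a1_auto[OF assms]])
  fix X Y assume "X \<in> carrier (SG g)" "Y \<in> carrier (SG g)"
  then obtain u v where uv: "u \<in> swords g" "X = sg_class g u" "v \<in> swords g" "Y = sg_class g v"
    by (metis surface_group_carrierE)
  have su: "subst twist_subst u \<in> swords g" "subst twist_subst v \<in> swords g"
    using uv admissible_twist_subst[OF assms]
    by (auto simp: subst_swords)
  show "isect g (ab_class (twist_a1 g X)) (ab_class (twist_a1 g Y)) = isect g (ab_class X) (ab_class Y)"
    using uv su assms
    by (simp add: twist_a1_sg_class ab_class_sg_class ab_word_subst_twist[abs_def] isect_shear_invariant)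
qed

section \<open>Automorphisms scale the intersection form\<close>

lemma group_hom_surface_group: "\<phi> \<in> hom (SG g) (SG g) \<Longrightarrow> group_hom (SG g) (SG g) \<phi>"
  by (simp add: group_hom_def group_hom_axioms_def group_surface_group)

lemma sg_class_Cons: "x \<in> sletters g \<Longrightarrow> w \<in> swords g \<Longrightarrow>
  sg_class g (x # w) = sg_class g [x] \<otimes>\<^bsub>SG g\<^esub> sg_class g w"
  by (simp add: mult_sg_class)

lemma sg_class_inverse_letter: "gen_idx t < g \<Longrightarrow> sg_class g [(t, True)] = inv\<^bsub>SG g\<^esub> sg_class g [(t, False)]"
  by (simp add: inv_sg_class word_inv_def linv_def sletters_def)

lemma class_weight_mult: "X \<in> carrier (SG g) \<Longrightarrow> Y \<in> carrier (SG g) \<Longrightarrow>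
   class_weight \<gamma> (X \<otimes>\<^bsub>SG g\<^esub> Y) = class_weight \<gamma> X + class_weight \<gamma> Y"
  by (auto elim!: surface_group_carrierE simp: mult_sg_class class_weight_sg_class)

lemma class_weight_inv: "X \<in> carrier (SG g) \<Longrightarrow> class_weight \<gamma> (inv\<^bsub>SG g\<^esub> X) = - class_weight \<gamma> X"
  by (auto elim!: surface_group_carrierE simp: inv_sg_class class_weight_sg_class)

definition pullback :: "nat \<Rightarrow> (sword set \<Rightarrow> sword set) \<Rightarrow> (sgen \<Rightarrow> int) \<Rightarrow> sgen \<Rightarrow> int" where
  "pullback g \<phi> \<gamma> t = class_weight \<gamma> (\<phi> (sg_class g [(t, False)]))"

lemma class_weight_pullback_sg_class: assumes h: "\<phi> \<in> hom (SG g) (SG g)"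
  shows "w \<in> swords g \<Longrightarrow> class_weight \<gamma> (\<phi> (sg_class g w)) = word_weight (pullback g \<phi> \<gamma>) w"
proof (induction w)
  case Nil
  interpret h: group_hom "SG g" "SG g" \<phi> by (rule group_hom_surface_group[OF h])
  have "\<phi> (sg_class g []) = sg_class g []" using h.hom_one by (simp add: one_surface_group)
  then show ?case by (simp add: class_weight_sg_class)
next
  case (Cons x w)
  interpret h: group_hom "SG g" "SG g" \<phi> by (rule group_hom_surface_group[OF h])
  obtain t b where x: "x = (t, b)" by force
  have t: "gen_idx t < g" using Cons x by (simp add: sletters_def)
  have c: "sg_class g [(t, False)] \<in> carrier (SG g)" using t by (simp add: sletters_def)
  have "class_weight \<gamma> (\<phi> (sg_class g (x # w))) =
      class_weight \<gamma> (\<phi> (sg_class g [x])) + class_weight \<gamma> (\<phi> (sg_class g w))"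
    using Cons by (subst sg_class_Cons[of x g w]) (simp_all add: class_weight_mult h.hom_mult)
  moreover have "class_weight \<gamma> (\<phi> (sg_class g [x])) = (if b then - pullback g \<phi> \<gamma> t else pullback g \<phi> \<gamma> t)"
    using c t x
      by (cases b) (simp_all add: sg_class_inverse_letter h.hom_inv class_weight_inv pullback_def)
  ultimately show ?case using Cons x by simp
qed

lemma class_weight_pullback: "\<phi> \<in> hom (SG g) (SG g) \<Longrightarrow> X \<in> carrier (SG g) \<Longrightarrow>
    class_weight \<gamma> (\<phi> X) = class_weight (pullback g \<phi> \<gamma>) X"
  by (auto elim!: surface_group_carrierE simp: class_weight_pullback_sg_class class_weight_sg_class)

lemma pullback_pullback_inverse: assumes "\<psi> \<in> hom (SG g) (SG g)" "\<phi> \<in> hom (SG g) (SG g)"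
  "\<And>X. X \<in> carrier (SG g) \<Longrightarrow> \<psi> (\<phi> X) = X" "gen_idx t < g"
  shows "pullback g \<phi> (pullback g \<psi> \<gamma>) t = \<gamma> t"
proof -
  have c: "sg_class g [(t, False)] \<in> carrier (SG g)" using assms(4) by (simp add: sletters_def)
  then have "\<phi> (sg_class g [(t, False)]) \<in> carrier (SG g)" using assms(2) by (auto simp: hom_def)
  then show ?thesis using assms c
    by (simp add: pullback_def class_weight_pullback[symmetric] class_weight_sg_class sletters_def)
qed

definition isect_dual :: "sword set \<Rightarrow> sgen \<Rightarrow> int" where
  "isect_dual X t = (case t of GA i \<Rightarrow> - ab_class X (GB i) | GB i \<Rightarrow> ab_class X (GA i))"

lemma class_weight_isect_dual: "Y \<in> carrier (SG g) \<Longrightarrow>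
    class_weight (isect_dual X) Y = isect g (ab_class X) (ab_class Y)"
  by (simp add: class_weight_gen_sum gen_sum_def isect_def isect_dual_def algebra_simps sum_subtractf)

lemma isect_isect_dual: assumes "Z \<in> carrier (SG g)"
  shows "isect g (isect_dual Z) \<gamma> = - class_weight \<gamma> Z"
proof -
  have "isect g (isect_dual Z) \<gamma> + gen_sum g (\<lambda>s. \<gamma> s * ab_class Z s) = (\<Sum>i<g. 0)"
    unfolding isect_def gen_sum_def sum.distrib[symmetric]
      by (rule sum.cong) (auto simp: isect_dual_def algebra_simps)
  then show ?thesis using class_weight_gen_sum[OF assms, of \<gamma>] by simp
qed

lemma isect_ab_class_conformal:
  assumes h: "\<phi> \<in> hom (SG g) (SG g)" and hi: "\<psi> \<in> hom (SG g) (SG g)"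
    and inv: "\<And>X. X \<in> carrier (SG g) \<Longrightarrow> \<psi> (\<phi> X) = X"
    and conf: "\<And>\<gamma> \<delta>. isect g (pullback g \<phi> \<gamma>) (pullback g \<phi> \<delta>) = k * isect g \<gamma> \<delta>"
    and X: "X \<in> carrier (SG g)" and Y: "Y \<in> carrier (SG g)"
  shows "isect g (ab_class (\<phi> X)) (ab_class (\<phi> Y)) = k * isect g (ab_class X) (ab_class Y)"
proof -
  have pX: "\<phi> X \<in> carrier (SG g)" "\<phi> Y \<in> carrier (SG g)" using h X Y by (auto simp: hom_def)
  have "isect g (ab_class (\<phi> X)) (ab_class (\<phi> Y)) = class_weight (isect_dual (\<phi> X)) (\<phi> Y)"
    using pX by (simp add: class_weight_isect_dual)
  also have "\<dots> = class_weight (pullback g \<phi> (isect_dual (\<phi> X))) Y" using h Y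
    by (simp add: class_weight_pullback)
  also have "\<dots> = - isect g (isect_dual Y) (pullback g \<phi> (isect_dual (\<phi> X)))" using Y
    by (simp add: isect_isect_dual)
  also have "isect g (isect_dual Y) (pullback g \<phi> (isect_dual (\<phi> X))) =
      isect g (pullback g \<phi> (pullback g \<psi> (isect_dual Y))) (pullback g \<phi> (isect_dual (\<phi> X)))"
    by (rule isect_cong) (simp_all add: pullback_pullback_inverse[OF hi h inv])
  also have "\<dots> = k * isect g (pullback g \<psi> (isect_dual Y)) (isect_dual (\<phi> X))" by (rule conf)
  also have "isect g (pullback g \<psi> (isect_dual Y)) (isect_dual (\<phi> X)) =
      class_weight (pullback g \<psi> (isect_dual Y)) (\<phi> X)"
    using pX by (simp add: isect_antisym[of g "pullback g \<psi> (isect_dual Y)"] isect_isect_dual)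
  also have "\<dots> = class_weight (isect_dual Y) X" using hi pX
    by (simp add: class_weight_pullback[symmetric] inv X)
  also have "\<dots> = isect g (ab_class Y) (ab_class X)" using X by (simp add: class_weight_isect_dual)
  finally show ?thesis by (simp add: isect_antisym[of g "ab_class Y"])
qed

(* The integral Heisenberg group; (a, b, c) stands for the matrix [[1, a, c], [0, 1, b], [0, 0, 1]]. *)
type_synonym heis = "int \<times> int \<times> int"

fun heis_mult :: "heis \<Rightarrow> heis \<Rightarrow> heis" where
  "heis_mult (a, b, c) (a', b', c') = (a + a', b + b', c + c' + a * b')"

fun heis_inv :: "heis \<Rightarrow> heis" where
  "heis_inv (a, b, c) = (- a, - b, - c + a * b)"

lemma heis_mult_assoc: "heis_mult (heis_mult x y) z = heis_mult x (heis_mult y z)"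
  by (cases x, cases y, cases z) (simp add: algebra_simps)

lemma heis_mult_one[simp]: "heis_mult (0,0,0) x = x" "heis_mult x (0,0,0) = x"
  by (cases x, simp)+

lemma heis_mult_inv[simp]: "heis_mult x (heis_inv x) = (0,0,0)" "heis_mult (heis_inv x) x = (0,0,0)"
  by (cases x, simp add: algebra_simps)+

lemma heis_mult_fst[simp]: "fst (heis_mult x y) = fst x + fst y"
  and heis_mult_snd[simp]: "fst (snd (heis_mult x y)) = fst (snd x) + fst (snd y)"
  by (cases x, cases y, simp)+

lemma heis_inv_fst[simp]: "fst (heis_inv x) = - fst x"
  and heis_inv_snd[simp]: "fst (snd (heis_inv x)) = - fst (snd x)"
  by (cases x, simp)+

lemma heis_mult_cancel[simp]: "heis_mult x (heis_mult (heis_inv x) y) = y"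
  by (simp add: heis_mult_assoc[symmetric])

lemma heis_inv_mult: "heis_inv (heis_mult x y) = heis_mult (heis_inv y) (heis_inv x)"
  by (cases x, cases y) (simp add: algebra_simps)

definition heis_letter :: "(sgen \<Rightarrow> heis) \<Rightarrow> sletter \<Rightarrow> heis" where
  "heis_letter c x = (if snd x then heis_inv (c (fst x)) else c (fst x))"

definition heis_eval :: "(sgen \<Rightarrow> heis) \<Rightarrow> sword \<Rightarrow> heis" where
  "heis_eval c w = foldr (\<lambda>x acc. heis_mult (heis_letter c x) acc) w (0,0,0)"

lemma heis_eval_Nil[simp]: "heis_eval c [] = (0,0,0)" by (simp add: heis_eval_def)
lemma heis_eval_Cons[simp]: "heis_eval c (x # w) = heis_mult (heis_letter c x) (heis_eval c w)"
  by (simp add: heis_eval_def)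
lemma heis_eval_append[simp]: "heis_eval c (u @ w) = heis_mult (heis_eval c u) (heis_eval c w)"
  by (induction u) (simp_all add: heis_mult_assoc)

lemma heis_letter_linv: "heis_letter c (linv x) = heis_inv (heis_letter c x)"
  by (cases "c (fst x)") (simp add: heis_letter_def linv_def algebra_simps)

lemma heis_eval_word_inv: "heis_eval c (word_inv w) = heis_inv (heis_eval c w)"
  by (induction w) (simp_all add: word_inv_Cons heis_inv_mult heis_letter_linv)

lemma heis_eval_fst: "fst (heis_eval c w) = word_weight (\<lambda>t. fst (c t)) w"
  by (induction w) (auto simp: heis_letter_def split: prod.splits)

lemma heis_eval_snd: "fst (snd (heis_eval c w)) = word_weight (\<lambda>t. fst (snd (c t))) w"
  by (induction w) (auto simp: heis_letter_def split: prod.splits)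

lemma heis_eval_relator: "heis_eval c (relator g) = (0, 0, isect g (\<lambda>t. fst (c t)) (\<lambda>t. fst (snd (c t))))"
proof (induction g)
  case 0 then show ?case by (simp add: relator_def isect_def)
next
  case (Suc g)
  obtain a1 b1 c1 where 1: "c (GA g) = (a1, b1, c1)" by (cases "c (GA g)") auto
  obtain a2 b2 c2 where 2: "c (GB g) = (a2, b2, c2)" by (cases "c (GB g)") auto
  show ?case using Suc 1 2 by (simp add: relator_Suc isect_def heis_letter_def algebra_simps)
qed

lemma heis_eval_sg_eq: assumes "heis_eval c (relator g) = (0,0,0)"
  shows "sg_eq g u v \<Longrightarrow> heis_eval c u = heis_eval c v"
  by (induction rule: sg_eq.induct) (simp_all add: assms heis_letter_linv heis_mult_assoc)

definition heis_class :: "(sgen \<Rightarrow> heis) \<Rightarrow> sword set \<Rightarrow> heis" where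
  "heis_class c X = heis_eval c (SOME w. w \<in> X)"

lemma heis_class_sg_class:
  "heis_eval c (relator g) = (0,0,0) \<Longrightarrow> w \<in> swords g \<Longrightarrow> heis_class c (sg_class g w) = heis_eval c w"
  unfolding heis_class_def by (metis heis_eval_sg_eq sg_eq_some_class)

lemma heis_class_mult:
  "heis_eval c (relator g) = (0,0,0) \<Longrightarrow> X \<in> carrier (SG g) \<Longrightarrow> Y \<in> carrier (SG g) \<Longrightarrow>
   heis_class c (X \<otimes>\<^bsub>SG g\<^esub> Y) = heis_mult (heis_class c X) (heis_class c Y)"
  by (auto elim!: surface_group_carrierE simp: mult_sg_class heis_class_sg_class)

lemma heis_class_inv:
  "heis_eval c (relator g) = (0,0,0) \<Longrightarrow> X \<in> carrier (SG g) \<Longrightarrow>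
   heis_class c (inv\<^bsub>SG g\<^esub> X) = heis_inv (heis_class c X)"
  by (auto elim!: surface_group_carrierE simp: inv_sg_class heis_class_sg_class heis_eval_word_inv)

lemma heis_class_hom_sg_class:
  assumes rel: "heis_eval c (relator g) = (0,0,0)" and h: "\<phi> \<in> hom (SG g) (SG g)"
  shows "w \<in> swords g \<Longrightarrow>
    heis_class c (\<phi> (sg_class g w)) = heis_eval (\<lambda>t. heis_class c (\<phi> (sg_class g [(t, False)]))) w"
proof (induction w)
  interpret h: group_hom "SG g" "SG g" \<phi> by (rule group_hom_surface_group[OF h])
  case Nil
  have "\<phi> (sg_class g []) = sg_class g []" using h.hom_one by (simp add: one_surface_group)
  then show ?case by (simp add: heis_class_sg_class[OF rel])
next
  interpret h: group_hom "SG g" "SG g" \<phi> by (rule group_hom_surface_group[OF h])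
  case (Cons x w)
  obtain t b where x: "x = (t, b)" by force
  have t: "gen_idx t < g" using Cons x by (simp add: sletters_def)
  then have t_class: "sg_class g [(t, False)] \<in> carrier (SG g)" by (simp add: sletters_def)
  have "heis_class c (\<phi> (sg_class g (x # w))) =
      heis_mult (heis_class c (\<phi> (sg_class g [x]))) (heis_class c (\<phi> (sg_class g w)))"
    using Cons by (subst sg_class_Cons[of x g w]) (simp_all add: heis_class_mult[OF rel])
  moreover have "heis_class c (\<phi> (sg_class g [x])) =
      heis_letter (\<lambda>t. heis_class c (\<phi> (sg_class g [(t, False)]))) x"
    using t t_class x
    by (cases b) (simp_all add: sg_class_inverse_letter h.hom_inv heis_class_inv[OF rel] heis_letter_def)
  ultimately show ?case using Cons by simp
qed

(* An isotropic pair (\<alpha>, \<beta>) is exactly what makes t \<mapsto> (\<alpha> t, \<beta> t, 0) kill the relator;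
   composing the resulting homomorphism to the Heisenberg group with \<phi> shows that the
   pulled-back pair is isotropic again. *)
lemma pullback_isotropic:
  assumes h: "\<phi> \<in> hom (SG g) (SG g)" and iso: "isect g \<alpha> \<beta> = 0"
  shows "isect g (pullback g \<phi> \<alpha>) (pullback g \<phi> \<beta>) = 0"
proof -
  define c where "c t = (\<alpha> t, \<beta> t, 0::int)" for t
  define c' where "c' = (\<lambda>t. heis_class c (\<phi> (sg_class g [(t, False)])))"
  have rel: "heis_eval c (relator g) = (0,0,0)" using iso by (simp add: heis_eval_relator c_def)
  have "heis_eval c' (relator g) = heis_class c (\<phi> (sg_class g (relator g)))"
    unfolding c'_def by (rule heis_class_hom_sg_class[OF rel h relator_swords, symmetric])
  also have "\<phi> (sg_class g (relator g)) = sg_class g []"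
    using group_hom.hom_one[OF group_hom_surface_group[OF h]]
    by (simp add: sg_class_relator one_surface_group)
  finally have "isect g (\<lambda>t. fst (c' t)) (\<lambda>t. fst (snd (c' t))) = 0"
    by (simp add: heis_eval_relator heis_class_sg_class[OF rel])
  moreover have "fst (c' t) = pullback g \<phi> \<alpha> t" "fst (snd (c' t)) = pullback g \<phi> \<beta> t"
    if "gen_idx t < g" for t
  proof -
    have "\<phi> (sg_class g [(t, False)]) \<in> carrier (SG g)"
      using that h by (simp add: hom_in_carrier sletters_def)
    then obtain v where "v \<in> swords g" "\<phi> (sg_class g [(t, False)]) = sg_class g v"
      by (rule surface_group_carrierE)
    then show "fst (c' t) = pullback g \<phi> \<alpha> t" "fst (snd (c' t)) = pullback g \<phi> \<beta> t"
      by (simp_all add: c'_def heis_class_sg_class[OF rel] pullback_def class_weight_sg_class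
          heis_eval_fst heis_eval_snd c_def)
  qed
  ultimately show ?thesis by (metis (no_types, lifting) isect_cong)
qed

definition unit_vec :: "sgen \<Rightarrow> sgen \<Rightarrow> int" where "unit_vec t = (\<lambda>s. if s = t then 1 else 0)"

definition isect_coeff :: "sgen \<Rightarrow> sgen \<Rightarrow> int" where
  "isect_coeff s r = (case s of GA i \<Rightarrow> if r = GB i then 1 else 0 | GB i \<Rightarrow> if r = GA i then -1 else 0)"

definition bilin :: "nat \<Rightarrow> (sgen \<Rightarrow> sgen \<Rightarrow> int) \<Rightarrow> (sgen \<Rightarrow> int) \<Rightarrow> (sgen \<Rightarrow> int) \<Rightarrow> int" where
  "bilin g c x y = gen_sum g (\<lambda>s. gen_sum g (\<lambda>r. x s * y r * c s r))"

lemma isect_unit_vec_GA: "j < g \<Longrightarrow> isect g (unit_vec (GA j)) y = y (GB j)"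
proof -
  assume j: "j < g"
  have "isect g (unit_vec (GA j)) y = (\<Sum>i<g. if i = j then y (GB i) else 0)"
    unfolding isect_def by (rule sum.cong) (auto simp: unit_vec_def)
  then show ?thesis using j by simp
qed

lemma isect_unit_vec_GB: "j < g \<Longrightarrow> isect g (unit_vec (GB j)) y = - y (GA j)"
proof -
  assume j: "j < g"
  have "isect g (unit_vec (GB j)) y = (\<Sum>i<g. if i = j then - y (GA i) else 0)"
    unfolding isect_def by (rule sum.cong) (auto simp: unit_vec_def)
  then show ?thesis using j by simp
qed

lemma bilin_add1: "bilin g c (\<lambda>s. x s + x' s) y = bilin g c x y + bilin g c x' y"
  unfolding bilin_def by (simp add: gen_sum_add[symmetric] algebra_simps)

lemma bilin_add2: "bilin g c x (\<lambda>s. y s + y' s) = bilin g c x y + bilin g c x y'"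
proof -
  have "bilin g c x (\<lambda>s. y s + y' s) =
      gen_sum g (\<lambda>s. gen_sum g (\<lambda>r. x s * y r * c s r) + gen_sum g (\<lambda>r. x s * y' r * c s r))"
    unfolding bilin_def
      by (rule gen_sum_cong, subst gen_sum_add[symmetric], simp add: algebra_simps)
  then show ?thesis by (simp add: gen_sum_add bilin_def)
qed

lemma bilin_neg2: "bilin g c x (\<lambda>s. - y s) = - bilin g c x y"
proof -
  have "bilin g c x (\<lambda>s. - y s) = gen_sum g (\<lambda>s. (-1) * gen_sum g (\<lambda>r. x s * y r * c s r))"
    unfolding bilin_def
      by (rule gen_sum_cong, subst gen_sum_cmult[symmetric], simp add: algebra_simps)
  then show ?thesis by (simp add: gen_sum_cmult bilin_def gen_sum_neg)
qed

lemma bilin_unit_vec: assumes "gen_idx s < g" "gen_idx r < g"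
  shows "bilin g c (unit_vec s) (unit_vec r) = c s r"
proof -
  have "bilin g c (unit_vec s) (unit_vec r) =
      gen_sum g (\<lambda>s'. if s' = s then gen_sum g (\<lambda>r'. if r' = r then c s' r' else 0) else 0)"
    unfolding bilin_def by (rule gen_sum_cong) (auto simp: unit_vec_def intro!: gen_sum_cong)
  also have "\<dots> = c s r" using assms by (simp add: gen_sum_delta)
  finally show ?thesis .
qed

lemma isect_unit_vec: assumes "gen_idx s < g" "gen_idx r < g"
  shows "isect g (unit_vec s) (unit_vec r) = isect_coeff s r"
  using assms
    by (cases s, simp_all add: isect_unit_vec_GA isect_unit_vec_GB) (auto simp: unit_vec_def isect_coeff_def)

lemma isect_expand: "isect g x y = gen_sum g (\<lambda>s. gen_sum g (\<lambda>r. x s * y r * isect_coeff s r))"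
proof -
  have "gen_sum g (\<lambda>s. gen_sum g (\<lambda>r. x s * y r * isect_coeff s r)) =
        gen_sum g (\<lambda>s. case s of GA i \<Rightarrow> x (GA i) * y (GB i) | GB i \<Rightarrow> - (x (GB i) * y (GA i)))"
  proof (rule gen_sum_cong)
    fix s assume s: "gen_idx s < g"
    show "gen_sum g (\<lambda>r. x s * y r * isect_coeff s r) =
        (case s of GA i \<Rightarrow> x (GA i) * y (GB i) | GB i \<Rightarrow> - (x (GB i) * y (GA i)))"
    proof (cases s)
      case (GA i)
      have "gen_sum g (\<lambda>r. x s * y r * isect_coeff s r) = gen_sum g (\<lambda>r. if r = GB i then x s * y r else 0)"
        using GA by (intro gen_sum_cong) (auto simp: isect_coeff_def)
      then show ?thesis using GA s by (simp add: gen_sum_delta)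
    next
      case (GB i)
      have "gen_sum g (\<lambda>r. x s * y r * isect_coeff s r) = gen_sum g (\<lambda>r. if r = GA i then - (x s * y r) else 0)"
        using GB by (intro gen_sum_cong) (auto simp: isect_coeff_def)
      then show ?thesis using GB s by (simp add: gen_sum_delta)
    qed
  qed
  then show ?thesis by (simp add: gen_sum_def isect_def)
qed

lemma coeff_eq_isect_coeff_if_isotropic_vanish:
  assumes g: "0 < g" and hyp: "\<And>x y. isect g x y = 0 \<Longrightarrow> bilin g c x y = 0"
    and s: "gen_idx s < g" and r: "gen_idx r < g"
  shows "c s r = c (GA 0) (GB 0) * isect_coeff s r"
proof -
  define k where "k = c (GA 0) (GB 0)"
  have i: "c s r = 0" if "gen_idx s < g" "gen_idx r < g" "isect_coeff s r = 0" for s r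
    using hyp[of "unit_vec s" "unit_vec r"] that by (simp add: bilin_unit_vec isect_unit_vec)
  have ii: "c (GA i) (GB i) = k" if "i < g" for i
  proof (cases "i = 0")
    case True then show ?thesis by (simp add: k_def)
  next
    case False
    let ?x = "\<lambda>s. unit_vec (GA i) s + unit_vec (GA 0) s" and ?y = "\<lambda>r. unit_vec (GB i) r + - unit_vec (GB 0) r"
    have "isect g ?x ?y = 0" using that g False
      by (simp only: isect_add1 isect_unit_vec_GA) (simp add: unit_vec_def)
    then have z: "bilin g c ?x ?y = 0" by (rule hyp)
    have e: "bilin g c ?x ?y = bilin g c (unit_vec (GA i)) (unit_vec (GB i))
        + - bilin g c (unit_vec (GA i)) (unit_vec (GB 0)) +
       (bilin g c (unit_vec (GA 0)) (unit_vec (GB i)) + - bilin g c (unit_vec (GA 0)) (unit_vec (GB 0)))"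
      by (simp only: bilin_add1 bilin_add2 bilin_neg2)
    have "c (GA i) (GB 0) = 0" "c (GA 0) (GB i) = 0" using that g False
      by (auto intro!: i simp: isect_coeff_def)
    then show ?thesis using z e that g by (simp add: bilin_unit_vec k_def)
  qed
  have iii: "c (GB i) (GA i) = - k" if "i < g" for i
  proof -
    let ?x = "\<lambda>s. unit_vec (GA i) s + unit_vec (GB i) s"
    have "bilin g c ?x ?x = 0" by (rule hyp) (rule isect_self)
    moreover have "bilin g c ?x ?x = c (GA i) (GA i) + c (GA i) (GB i) + c (GB i) (GA i) + c (GB i) (GB i)"
      using that by (simp add: bilin_add1 bilin_add2 bilin_unit_vec)
    moreover have "c (GA i) (GA i) = 0" "c (GB i) (GB i) = 0" using that
      by (auto intro!: i simp: isect_coeff_def)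
    ultimately show ?thesis using ii[OF that] by simp
  qed
  have "c s r = k * isect_coeff s r"
  proof (cases "isect_coeff s r = 0")
    case True then show ?thesis using i s r by simp
  next
    case False
    then show ?thesis using s r ii iii
      by (cases s; cases r) (auto simp: isect_coeff_def split: if_splits)
  qed
  then show ?thesis by (simp add: k_def)
qed

lemma bilin_proportional_isect:
  assumes g: "0 < g" and hyp: "\<And>x y. isect g x y = 0 \<Longrightarrow> bilin g c x y = 0"
  shows "\<exists>k. \<forall>x y. bilin g c x y = k * isect g x y"
proof -
  define k where "k = c (GA 0) (GB 0)"
  have coeff: "c s r = k * isect_coeff s r" if "gen_idx s < g" "gen_idx r < g" for s r
    unfolding k_def by (rule coeff_eq_isect_coeff_if_isotropic_vanish[OF g hyp that])
  have "bilin g c x y = k * isect g x y" for x y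
  proof -
    have "bilin g c x y = gen_sum g (\<lambda>s. gen_sum g (\<lambda>r. k * (x s * y r * isect_coeff s r)))"
      unfolding bilin_def by (intro gen_sum_cong) (simp add: coeff)
    also have "\<dots> = k * isect g x y" by (simp add: gen_sum_cmult isect_expand)
    finally show ?thesis .
  qed
  then show ?thesis by blast
qed

definition ab_matrix :: "nat \<Rightarrow> (sword set \<Rightarrow> sword set) \<Rightarrow> sgen \<Rightarrow> sgen \<Rightarrow> int" where
  "ab_matrix g \<phi> t s = ab_class (\<phi> (sg_class g [(t, False)])) s"

definition pullback_coeff :: "nat \<Rightarrow> (sword set \<Rightarrow> sword set) \<Rightarrow> sgen \<Rightarrow> sgen \<Rightarrow> int" where
  "pullback_coeff g \<phi> s r = (\<Sum>i<g. ab_matrix g \<phi> (GA i) s * ab_matrix g \<phi> (GB i) r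
      - ab_matrix g \<phi> (GB i) s * ab_matrix g \<phi> (GA i) r)"

lemma pullback_gen_sum: assumes "\<phi> \<in> hom (SG g) (SG g)" "gen_idx t < g"
  shows "pullback g \<phi> \<gamma> t = gen_sum g (\<lambda>s. \<gamma> s * ab_matrix g \<phi> t s)"
proof -
  have "\<phi> (sg_class g [(t, False)]) \<in> carrier (SG g)" using assms
    by (auto simp: hom_def sletters_def)
  then show ?thesis by (simp add: pullback_def class_weight_gen_sum ab_matrix_def)
qed

lemma isect_pullback_eq_bilin: assumes h: "\<phi> \<in> hom (SG g) (SG g)"
  shows "isect g (pullback g \<phi> \<gamma>) (pullback g \<phi> \<delta>) = bilin g (pullback_coeff g \<phi>) \<gamma> \<delta>"
proof -
  let ?m = "ab_matrix g \<phi>"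
  have "isect g (pullback g \<phi> \<gamma>) (pullback g \<phi> \<delta>) =
    (\<Sum>i<g. gen_sum g (\<lambda>s. \<gamma> s * ?m (GA i) s) * gen_sum g (\<lambda>r. \<delta> r * ?m (GB i) r)
         - gen_sum g (\<lambda>s. \<gamma> s * ?m (GB i) s) * gen_sum g (\<lambda>r. \<delta> r * ?m (GA i) r))"
    unfolding isect_def by (rule sum.cong) (simp_all add: pullback_gen_sum[OF h])
  also have "\<dots> = (\<Sum>i<g. gen_sum g (\<lambda>s. gen_sum g (\<lambda>r. \<gamma> s * ?m (GA i) s * (\<delta> r * ?m (GB i) r)
         - \<gamma> s * ?m (GB i) s * (\<delta> r * ?m (GA i) r))))"
    by (simp add: gen_sum_prod gen_sum_diff)
  also have "\<dots> = gen_sum g (\<lambda>s. gen_sum g (\<lambda>r. \<Sum>i<g. \<gamma> s * ?m (GA i) s * (\<delta> r * ?m (GB i) r)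
         - \<gamma> s * ?m (GB i) s * (\<delta> r * ?m (GA i) r)))"
    by (simp add: sum_gen_sum)
  also have "\<dots> = bilin g (pullback_coeff g \<phi>) \<gamma> \<delta>"
    unfolding bilin_def pullback_coeff_def
    by (intro gen_sum_cong) (simp add: sum_distrib_left algebra_simps)
  finally show ?thesis .
qed

lemma pullback_isect_conformal: assumes g: "0 < g" and h: "\<phi> \<in> hom (SG g) (SG g)"
  shows "\<exists>k. \<forall>\<gamma> \<delta>. isect g (pullback g \<phi> \<gamma>) (pullback g \<phi> \<delta>) = k * isect g \<gamma> \<delta>"
proof -
  have "\<exists>k. \<forall>x y. bilin g (pullback_coeff g \<phi>) x y = k * isect g x y"
    by (rule bilin_proportional_isect[OF g])
      (simp add: isect_pullback_eq_bilin[OF h, symmetric] pullback_isotropic[OF h])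
  then show ?thesis by (simp add: isect_pullback_eq_bilin[OF h])
qed

definition auto_inv :: "nat \<Rightarrow> (sword set \<Rightarrow> sword set) \<Rightarrow> (sword set \<Rightarrow> sword set)" where
  "auto_inv g \<phi> = (\<lambda>X \<in> carrier (SG g). inv_into (carrier (SG g)) \<phi> X)"

lemma auto_inv_auto: "\<phi> \<in> auto (SG g) \<Longrightarrow> auto_inv g \<phi> \<in> auto (SG g)"
  unfolding auto_inv_def auto_def
  using group.restrict_inv_into_hom[OF group_surface_group] restrict_inv_into_Bij by blast

lemma auto_inv_left: "\<phi> \<in> auto (SG g) \<Longrightarrow> X \<in> carrier (SG g) \<Longrightarrow> auto_inv g \<phi> (\<phi> X) = X"
  unfolding auto_inv_def auto_def Bij_def
  by (auto simp: bij_betw_def bij_betw_imp_funcset inv_into_f_f)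

lemma auto_inv_right: "\<phi> \<in> auto (SG g) \<Longrightarrow> X \<in> carrier (SG g) \<Longrightarrow> \<phi> (auto_inv g \<phi> X) = X"
  unfolding auto_inv_def auto_def Bij_def
  by (auto simp: bij_betw_def f_inv_into_f)

lemma auto_closed: "\<phi> \<in> auto (SG g) \<Longrightarrow> X \<in> carrier (SG g) \<Longrightarrow> \<phi> X \<in> carrier (SG g)"
  by (auto simp: auto_def hom_def)

lemma auto_compose:
  "x \<in> auto (SG g) \<Longrightarrow> y \<in> auto (SG g) \<Longrightarrow> compose (carrier (SG g)) x y \<in> auto (SG g)"
  by (auto simp: auto_def compose_Bij intro: group.hom_compose[OF group_surface_group])

lemma auto_isect_conformal: assumes g: "0 < g" and \<phi>: "\<phi> \<in> auto (SG g)"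
  shows "\<exists>k. \<forall>X \<in> carrier (SG g). \<forall>Y \<in> carrier (SG g).
     isect g (ab_class (\<phi> X)) (ab_class (\<phi> Y)) = k * isect g (ab_class X) (ab_class Y)"
proof -
  have h: "\<phi> \<in> hom (SG g) (SG g)" using \<phi> by (simp add: auto_def)
  have hi: "auto_inv g \<phi> \<in> hom (SG g) (SG g)" using auto_inv_auto[OF \<phi>] by (simp add: auto_def)
  obtain k where k: "\<And>\<gamma> \<delta>. isect g (pullback g \<phi> \<gamma>) (pullback g \<phi> \<delta>) = k * isect g \<gamma> \<delta>"
    using pullback_isect_conformal[OF g h] by blast
  show ?thesis
    using isect_ab_class_conformal[OF h hi auto_inv_left[OF \<phi>] k] by blast
qed

(* Only the proportionality constant of \<phi> enters, not its sign, so \<phi> need not preserve orientation. *)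
lemma aut_plus_conj:
  assumes g: "0 < g" and \<phi>: "\<phi> \<in> auto (SG g)" and T: "T \<in> aut_plus g"
  shows "compose (carrier (SG g)) \<phi> (compose (carrier (SG g)) T (auto_inv g \<phi>)) \<in> aut_plus g"
proof -
  let ?C = "carrier (SG g)"
  let ?T = "compose ?C \<phi> (compose ?C T (auto_inv g \<phi>))"
  have Ta: "T \<in> auto (SG g)" using T by (simp add: aut_plus_def)
  have ia: "auto_inv g \<phi> \<in> auto (SG g)" by (rule auto_inv_auto[OF \<phi>])
  have val: "?T X = \<phi> (T (auto_inv g \<phi> X))" if "X \<in> ?C" for X
    using that by (simp add: compose_def)
  have auto: "?T \<in> auto (SG g)" using \<phi> Ta ia by (simp add: auto_compose)
  obtain k where k: "\<And>X Y. X \<in> ?C \<Longrightarrow> Y \<in> ?C \<Longrightarrow>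
     isect g (ab_class (\<phi> X)) (ab_class (\<phi> Y)) = k * isect g (ab_class X) (ab_class Y)"
    using auto_isect_conformal[OF g \<phi>] by blast
  show ?thesis
  proof (rule aut_plusI[OF auto])
    fix X Y assume XY: "X \<in> ?C" "Y \<in> ?C"
    let ?X = "auto_inv g \<phi> X" and ?Y = "auto_inv g \<phi> Y"
    have c: "?X \<in> ?C" "?Y \<in> ?C" using XY ia by (simp_all add: auto_closed)
    have "isect g (ab_class (?T X)) (ab_class (?T Y)) = k * isect g (ab_class (T ?X)) (ab_class (T ?Y))"
      using XY c Ta by (simp add: val k auto_closed)
    also have "\<dots> = k * isect g (ab_class ?X) (ab_class ?Y)" using T c by (simp add: aut_plus_def)
    also have "\<dots> = isect g (ab_class (\<phi> ?X)) (ab_class (\<phi> ?Y))" using c by (simp add: k)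
    also have "\<dots> = isect g (ab_class X) (ab_class Y)" using XY \<phi> by (simp add: auto_inv_right)
    finally show "isect g (ab_class (?T X)) (ab_class (?T Y)) = isect g (ab_class X) (ab_class Y)" .
  qed
qed

lemma aut_plus_compose:
  assumes "x \<in> aut_plus g" "y \<in> aut_plus g"
  shows "compose (carrier (SG g)) x y \<in> aut_plus g"
proof (rule aut_plusI)
  show "compose (carrier (SG g)) x y \<in> auto (SG g)"
    using assms by (simp add: aut_plus_def auto_compose)
  fix X Y assume "X \<in> carrier (SG g)" "Y \<in> carrier (SG g)"
  then show "isect g (ab_class (compose (carrier (SG g)) x y X)) (ab_class (compose (carrier (SG g)) x y Y))
      = isect g (ab_class X) (ab_class Y)"
    using assms by (simp add: compose_def aut_plus_def auto_closed)
qed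

lemma inner_class: "u \<in> swords g \<Longrightarrow> w \<in> swords g \<Longrightarrow>
  inner_aut g (sg_class g u) (sg_class g w) = sg_class g (u @ w @ word_inv u)"
  by (simp add: inner_aut_def mult_sg_class inv_sg_class)

lemma inner_auto: assumes a: "a \<in> carrier (SG g)" shows "inner_aut g a \<in> auto (SG g)"
proof -
  interpret G: group "SG g" by (rule group_surface_group)
  have h: "inner_aut g b \<in> hom (SG g) (SG g)" if "b \<in> carrier (SG g)" for b
    using that
      by (intro homI)
        (simp_all add: inner_aut_def G.m_assoc G.inv_closed, simp add: G.m_assoc[symmetric] G.l_inv)
  have ii: "inner_aut g (inv\<^bsub>SG g\<^esub> a) (inner_aut g a X) = X" if "X \<in> carrier (SG g)" for X
    using that a
      by (simp add: inner_aut_def G.m_assoc G.inv_closed, simp add: G.m_assoc[symmetric] G.l_inv G.r_inv)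
  have ii2: "inner_aut g a (inner_aut g (inv\<^bsub>SG g\<^esub> a) X) = X" if "X \<in> carrier (SG g)" for X
    using that a
      by (simp add: inner_aut_def G.m_assoc G.inv_closed, simp add: G.m_assoc[symmetric] G.l_inv G.r_inv)
  have "bij_betw (inner_aut g a) (carrier (SG g)) (carrier (SG g))"
    apply (rule bij_betwI[of _ _ _ "inner_aut g (inv\<^bsub>SG g\<^esub> a)"])
    using h[OF a] h[OF G.inv_closed[OF a]] ii ii2 by (auto simp: hom_def)
  then show ?thesis using h[OF a] by (simp add: auto_def Bij_def inner_aut_def)
qed

lemma inner_aut_plus: assumes a: "a \<in> carrier (SG g)" shows "inner_aut g a \<in> aut_plus g"
proof (rule aut_plusI[OF inner_auto[OF a]])
  have ab: "ab_class (inner_aut g a X) = ab_class X" if X: "X \<in> carrier (SG g)" for X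
  proof -
    obtain u where "u \<in> swords g" "a = sg_class g u" using a by (rule surface_group_carrierE)
    moreover obtain w where "w \<in> swords g" "X = sg_class g w" using X
      by (rule surface_group_carrierE)
    ultimately show ?thesis
      by (simp add: inner_class ab_class_sg_class fun_eq_iff ab_word_eq_word_weight)
  qed
  fix X Y assume "X \<in> carrier (SG g)" "Y \<in> carrier (SG g)"
  then show "isect g (ab_class (inner_aut g a X)) (ab_class (inner_aut g a Y))
      = isect g (ab_class X) (ab_class Y)"
    by (simp add: ab)
qed

lemma inner_aut_closed:
  "x \<in> carrier (SG g) \<Longrightarrow> X \<in> carrier (SG g) \<Longrightarrow> inner_aut g x X \<in> carrier (SG g)"
  by (simp add: inner_aut_def group.inv_closed[OF group_surface_group]
      monoid.m_closed[OF group.is_monoid[OF group_surface_group]])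

lemma inner_aut_mult_apply:
  assumes "x \<in> carrier (SG g)" "y \<in> carrier (SG g)" "X \<in> carrier (SG g)"
  shows "inner_aut g (x \<otimes>\<^bsub>SG g\<^esub> y) X = inner_aut g x (inner_aut g y X)"
proof -
  interpret G: group "SG g" by (rule group_surface_group)
  show ?thesis using assms by (simp add: inner_aut_def G.inv_mult_group G.m_assoc)
qed

lemma hom_inner_aut_apply:
  assumes "T \<in> hom (SG g) (SG g)" "x \<in> carrier (SG g)" "X \<in> carrier (SG g)"
  shows "T (inner_aut g x X) = inner_aut g (T x) (T X)"
proof -
  interpret T: group_hom "SG g" "SG g" T by (rule group_hom_surface_group[OF assms(1)])
  show ?thesis using assms(2,3) by (simp add: inner_aut_def)
qed

lemma compose_eqI: "(\<And>X. X \<in> C \<Longrightarrow> f (h X) = f' (h' X)) \<Longrightarrow> compose C f h = compose C f' h'"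
  by (auto simp: compose_def fun_eq_iff)

lemma inner_aut_commute_if_fixed:
  assumes T: "T \<in> hom (SG g) (SG g)" and a: "a \<in> carrier (SG g)" and Ta: "T a = a"
  shows "compose (carrier (SG g)) (inner_aut g a) T = compose (carrier (SG g)) T (inner_aut g a)"
  using assms by (intro compose_eqI) (simp add: hom_inner_aut_apply)

lemma inner_aut_conj_if_shifted:
  assumes T: "T \<in> hom (SG g) (SG g)" and a: "a \<in> carrier (SG g)" and w: "w \<in> carrier (SG g)"
    and Tw: "T w = inv\<^bsub>SG g\<^esub> a \<otimes>\<^bsub>SG g\<^esub> w"
  shows "compose (carrier (SG g)) (inner_aut g w) T =
    compose (carrier (SG g)) (compose (carrier (SG g)) (inner_aut g a) T) (inner_aut g w)"
proof (rule compose_eqI)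
  interpret G: group "SG g" by (rule group_surface_group)
  fix X assume X: "X \<in> carrier (SG g)"
  have TX: "T X \<in> carrier (SG g)" using T X by (rule hom_in_carrier)
  have aTw: "a \<otimes>\<^bsub>SG g\<^esub> T w = w"
    using G.inv_solve_left[OF hom_in_carrier[OF T w] a w] Tw by blast
  have "inner_aut g w (T X) = inner_aut g a (inner_aut g (T w) (T X))"
    using inner_aut_mult_apply[OF a hom_in_carrier[OF T w] TX] by (simp only: aTw)
  also have "\<dots> = compose (carrier (SG g)) (inner_aut g a) T (inner_aut g w X)"
    using T w X by (simp add: hom_inner_aut_apply compose_def inner_aut_closed)
  finally show "inner_aut g w (T X) = compose (carrier (SG g)) (inner_aut g a) T (inner_aut g w X)" .
qed

lemma nonsep_scc_subset_carrier:
  assumes "0 < g" shows "nonsep_scc g \<subseteq> carrier (SG g)"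
proof
  fix a assume "a \<in> nonsep_scc g"
  then obtain \<phi> where "\<phi> \<in> auto (SG g)" "a = \<phi> (sg_class g [(GA 0, False)])"
    by (auto simp: nonsep_scc_def)
  moreover have "sg_class g [(GA 0, False)] \<in> carrier (SG g)" using assms
    by (simp add: sletters_def)
  ultimately show "a \<in> carrier (SG g)" by (simp add: auto_closed)
qed

lemma nonsep_scc_twist:
  assumes g: "0 < g" and a: "a \<in> nonsep_scc g"
  obtains T w where "T \<in> aut_plus g" "w \<in> carrier (SG g)" "T a = a"
    "T w = inv\<^bsub>SG g\<^esub> a \<otimes>\<^bsub>SG g\<^esub> w"
proof -
  let ?C = "carrier (SG g)"
  obtain \<phi> where \<phi>: "\<phi> \<in> auto (SG g)" and a_eq: "a = \<phi> (sg_class g [(GA 0, False)])"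
    using a by (auto simp: nonsep_scc_def)
  define A where "A = sg_class g [(GA 0, False)]"
  define B' where "B' = sg_class g [(GB 0, True)]"
  have A: "A \<in> ?C" and B': "B' \<in> ?C" using g by (simp_all add: A_def B'_def sletters_def)
  have twist_A: "twist_a1 g A = A"
    using g by (simp add: A_def twist_a1_sg_class twist_subst_def subst_letter_def sletters_def)
  have twist_B': "twist_a1 g B' = inv\<^bsub>SG g\<^esub> A \<otimes>\<^bsub>SG g\<^esub> B'"
    using g by (simp add: A_def B'_def twist_a1_sg_class twist_subst_def subst_letter_def
        sletters_def inv_sg_class mult_sg_class word_inv_def linv_def)
  interpret \<phi>: group_hom "SG g" "SG g" \<phi>
    using \<phi> by (simp add: auto_def group_hom_surface_group)
  define T where "T = compose ?C \<phi> (compose ?C (twist_a1 g) (auto_inv g \<phi>))"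
  have T_apply: "T X = \<phi> (twist_a1 g (auto_inv g \<phi> X))" if "X \<in> ?C" for X
    using that by (simp add: T_def compose_def)
  show ?thesis
  proof
    show "T \<in> aut_plus g" unfolding T_def by (rule aut_plus_conj[OF g \<phi> twist_a1_aut_plus[OF g]])
    show "\<phi> B' \<in> ?C" using \<phi> B' by (rule auto_closed)
    show "T a = a"
      using \<phi> A by (simp add: a_eq A_def[symmetric] T_apply auto_closed auto_inv_left twist_A)
    show "T (\<phi> B') = inv\<^bsub>SG g\<^esub> a \<otimes>\<^bsub>SG g\<^esub> \<phi> B'"
      using \<phi> A B' by (simp add: a_eq A_def[symmetric] T_apply auto_closed auto_inv_left twist_B')
  qed
qed

section \<open>Translation numbers\<close>

definition deg_one :: "(real \<Rightarrow> real) \<Rightarrow> bool" where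
  "deg_one F \<longleftrightarrow> mono F \<and> (\<forall>x. F (x + 1) = F x + 1)"

lemma deg_one_nat: "deg_one F \<Longrightarrow> F (x + real n) = F x + real n"
proof (induction n arbitrary: x)
  case 0 then show ?case by simp
next
  case (Suc n)
  have "F (x + real (Suc n)) = F ((x + real n) + 1)" by (simp add: algebra_simps)
  also have "\<dots> = F (x + real n) + 1" using Suc.prems by (simp add: deg_one_def)
  finally show ?case using Suc by simp
qed

lemma deg_one_int: assumes "deg_one F" shows "F (x + of_int k) = F x + of_int k"
proof (cases "k \<ge> 0")
  case True
  then obtain n where "k = int n" by (metis nonneg_eq_int)
  then show ?thesis using deg_one_nat[OF assms] by simp
next
  case False
  then obtain n where n: "k = - int n" by (metis linorder_not_le neg_int_cases less_le)
  have "F ((x - real n) + real n) = F (x - real n) + real n" by (rule deg_one_nat[OF assms])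
  then show ?thesis using n by simp
qed

lemma deg_one_mono: "deg_one F \<Longrightarrow> x \<le> y \<Longrightarrow> F x \<le> F y"
  by (simp add: deg_one_def mono_def)

lemma deg_one_comp: "deg_one F \<Longrightarrow> deg_one G \<Longrightarrow> deg_one (F \<circ> G)"
  by (simp add: deg_one_def mono_def)

lemma deg_one_pow: "deg_one F \<Longrightarrow> deg_one (F ^^ n)"
proof (induction n)
  case 0 then show ?case by (simp add: deg_one_def mono_def)
next
  case (Suc n) then show ?case using deg_one_comp[of F "F ^^ n"] by (simp add: comp_def)
qed

lemma deg_one_shift: "deg_one F \<Longrightarrow> deg_one (\<lambda>x. F x + c)"
  by (simp add: deg_one_def mono_def)

lemma deg_one_bound: assumes F: "deg_one F" shows "F 0 - 1 \<le> F x - x \<and> F x - x \<le> F 0 + 1"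
proof -
  define k where "k = floor x"
  have k: "of_int k \<le> x" "x < of_int k + 1" unfolding k_def by linarith+
  have "F (0 + of_int k) \<le> F x" using k by (intro deg_one_mono[OF F]) simp
  moreover have "F x \<le> F (0 + of_int (k + 1))" using k by (intro deg_one_mono[OF F]) simp
  ultimately have "F 0 + of_int k \<le> F x" "F x \<le> F 0 + of_int (k + 1)"
    by (simp_all only: deg_one_int[OF F])
  then show ?thesis using k by simp
qed

lemma deg_one_bound_abs: "deg_one F \<Longrightarrow> \<bar>F x - x - F 0\<bar> \<le> 1"
  using deg_one_bound[of F x] by linarith

definition transl_num :: "(real \<Rightarrow> real) \<Rightarrow> real" where
  "transl_num F = lim (\<lambda>n. (F ^^ n) 0 / real n)"

lemma funpow_mult_bound: assumes F: "deg_one F"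
  shows "\<bar>(F ^^ (n * m)) 0 - real m * (F ^^ n) 0\<bar> \<le> real m"
proof (induction m)
  case 0 then show ?case by simp
next
  case (Suc m)
  have "(F ^^ (n * Suc m)) 0 = (F ^^ n) ((F ^^ (n * m)) 0)"
    by (simp add: funpow_add)
  moreover have "\<bar>(F ^^ n) ((F ^^ (n * m)) 0) - (F ^^ (n * m)) 0 - (F ^^ n) 0\<bar> \<le> 1"
    by (rule deg_one_bound_abs[OF deg_one_pow[OF F]])
  ultimately show ?case using Suc by (simp add: algebra_simps)
qed

lemma transl_quot_diff_bound: assumes F: "deg_one F" and "0 < n" "0 < m"
  shows "\<bar>(F ^^ n) 0 / real n - (F ^^ m) 0 / real m\<bar> \<le> 1 / real n + 1 / real m"
proof -
  let ?a = "\<lambda>k. (F ^^ k) 0"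
  have 1: "\<bar>?a (n * m) / real (n * m) - ?a n / real n\<bar> \<le> 1 / real n"
  proof -
    have "\<bar>?a (n * m) / real (n * m) - ?a n / real n\<bar> = \<bar>?a (n * m) - real m * ?a n\<bar> / real (n * m)"
      using assms by (simp add: field_simps abs_divide[symmetric])
    also have "\<dots> \<le> real m / real (n * m)"
      using funpow_mult_bound[OF F, of n m] assms by (intro divide_right_mono) auto
    also have "\<dots> = 1 / real n" using assms by simp
    finally show ?thesis .
  qed
  have 2: "\<bar>?a (n * m) / real (n * m) - ?a m / real m\<bar> \<le> 1 / real m"
  proof -
    have "\<bar>?a (m * n) / real (m * n) - ?a m / real m\<bar> = \<bar>?a (m * n) - real n * ?a m\<bar> / real (m * n)"
      using assms by (simp add: field_simps abs_divide[symmetric])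
    also have "\<dots> \<le> real n / real (m * n)"
      using funpow_mult_bound[OF F, of m n] assms by (intro divide_right_mono) auto
    also have "\<dots> = 1 / real m" using assms by simp
    finally show ?thesis by (simp add: mult.commute)
  qed
  show ?thesis using 1 2 by (smt (verit))
qed

lemma transl_num_LIMSEQ: assumes F: "deg_one F" shows "(\<lambda>n. (F ^^ n) 0 / real n) \<longlonglongrightarrow> transl_num F"
proof -
  have "Cauchy (\<lambda>n. (F ^^ n) 0 / real n)"
  proof (rule CauchyI)
    fix e :: real assume e: "0 < e"
    obtain M :: nat where M: "real M > 2 / e" using reals_Archimedean2 by blast
    have M0: "0 < M" using M e
      by (metis divide_pos_pos gr0I of_nat_0 order_less_asym zero_less_numeral)
    show "\<exists>M. \<forall>m\<ge>M. \<forall>n\<ge>M. norm ((F ^^ m) 0 / real m - (F ^^ n) 0 / real n) < e"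
    proof (intro exI allI impI)
      fix m n assume mn: "M \<le> m" "M \<le> n"
      have "norm ((F ^^ m) 0 / real m - (F ^^ n) 0 / real n) \<le> 1 / real m + 1 / real n"
        using transl_quot_diff_bound[OF F, of m n] mn M0 by simp
      also have "\<dots> \<le> 1 / real M + 1 / real M"
        using mn M0 by (intro add_mono; simp add: frac_le)
      also have "\<dots> = 2 / real M" by simp
      also have "\<dots> < e" using M e M0 by (simp add: field_simps)
      finally show "norm ((F ^^ m) 0 / real m - (F ^^ n) 0 / real n) < e" .
    qed
  qed
  then show ?thesis unfolding transl_num_def
    by (simp add: Cauchy_convergent_iff convergent_LIMSEQ_iff)
qed

lemma bounded_div_n_LIMSEQ_0: assumes "\<And>n. \<bar>f n\<bar> \<le> C" shows "(\<lambda>n. f n / real n) \<longlonglongrightarrow> 0"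
proof (rule Lim_null_comparison)
  show "\<forall>\<^sub>F n in sequentially. norm (f n / real n) \<le> C / real n"
    using assms by (intro always_eventually allI) (simp add: abs_divide divide_right_mono)
  show "(\<lambda>n. C / real n) \<longlonglongrightarrow> 0" by (rule lim_const_over_n)
qed

lemma transl_num_eq_if_bounded_diff:
  assumes F: "deg_one F" and K: "deg_one K" and b: "\<And>n. \<bar>(K ^^ n) 0 - (F ^^ n) 0\<bar> \<le> C"
  shows "transl_num K = transl_num F"
proof -
  have "(\<lambda>n. (F ^^ n) 0 / real n + ((K ^^ n) 0 - (F ^^ n) 0) / real n) \<longlonglongrightarrow> transl_num F + 0"
    by (intro tendsto_add transl_num_LIMSEQ[OF F] bounded_div_n_LIMSEQ_0[OF b])
  then have "(\<lambda>n. (K ^^ n) 0 / real n) \<longlonglongrightarrow> transl_num F" by (simp add: diff_divide_distrib)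
  then show ?thesis using transl_num_LIMSEQ[OF K] LIMSEQ_unique by blast
qed

lemma funpow_shift: assumes F: "deg_one F"
  shows "((\<lambda>x. F x + of_int m) ^^ n) x = (F ^^ n) x + real n * of_int m"
proof (induction n)
  case 0 then show ?case by simp
next
  case (Suc n)
  have "F ((F ^^ n) x + of_int (int n * m)) = F ((F ^^ n) x) + of_int (int n * m)"
    by (rule deg_one_int[OF F])
  then show ?case using Suc by (simp add: algebra_simps)
qed

lemma transl_num_shift: assumes F: "deg_one F"
  shows "transl_num (\<lambda>x. F x + of_int m) = transl_num F + of_int m"
proof -
  have "(\<lambda>n. (F ^^ n) 0 / real n + of_int m) \<longlonglongrightarrow> transl_num F + of_int m"
    by (intro tendsto_add transl_num_LIMSEQ[OF F] tendsto_const)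
  moreover have "\<forall>\<^sub>F n in sequentially. (F ^^ n) 0 / real n + of_int m = ((\<lambda>x. F x + of_int m) ^^ n) 0 / real n"
    using eventually_gt_at_top[of 0]
    by eventually_elim (simp add: funpow_shift[OF F] field_simps)
  ultimately have "(\<lambda>n. ((\<lambda>x. F x + of_int m) ^^ n) 0 / real n) \<longlonglongrightarrow> transl_num F + of_int m"
    by (rule Lim_transform_eventually)
  then show ?thesis using transl_num_LIMSEQ[OF deg_one_shift[OF F]] LIMSEQ_unique by blast
qed

lemma transl_num_conj:
  assumes F: "deg_one F" and G: "deg_one G" and K: "deg_one K" and c: "\<And>x. G (F x) = K (G x)"
  shows "transl_num F = transl_num K"
proof -
  have p: "G ((F ^^ n) x) = (K ^^ n) (G x)" for n x
    by (induction n) (simp_all add: c)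
  have "\<bar>(K ^^ n) 0 - (F ^^ n) 0\<bar> \<le> 2" for n
  proof -
    have 1: "\<bar>(K ^^ n) (G 0) - G 0 - (K ^^ n) 0\<bar> \<le> 1"
      by (rule deg_one_bound_abs[OF deg_one_pow[OF K]])
    have 2: "\<bar>G ((F ^^ n) 0) - (F ^^ n) 0 - G 0\<bar> \<le> 1" by (rule deg_one_bound_abs[OF G])
    show ?thesis using 1 2 p[of n 0] by linarith
  qed
  then show ?thesis using transl_num_eq_if_bounded_diff[OF F K] by metis
qed

lemma transl_num_comp_commuting:
  assumes F: "deg_one F" and G: "deg_one G" and c: "\<And>x. F (G x) = G (F x)"
  shows "transl_num (F \<circ> G) = transl_num F + transl_num G"
proof -
  have cn: "(F ^^ n) (G x) = G ((F ^^ n) x)" for n x by (induction n) (simp_all add: c)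
  have p: "((F \<circ> G) ^^ n) x = (F ^^ n) ((G ^^ n) x)" for n x
  proof (induction n arbitrary: x)
    case 0 then show ?case by simp
  next
    case (Suc n)
    have "((F \<circ> G) ^^ Suc n) x = ((F \<circ> G) ^^ n) (F (G x))"
      by (simp only: funpow_Suc_right comp_apply)
    also have "\<dots> = (F ^^ n) ((G ^^ n) (F (G x)))" by (rule Suc)
    also have "(G ^^ n) (F (G x)) = F ((G ^^ n) (G x))"
    proof -
      have "(G ^^ n) (F y) = F ((G ^^ n) y)" for y by (induction n) (simp_all add: c)
      then show ?thesis by simp
    qed
    finally show ?case by (simp only: funpow_Suc_right comp_apply)
  qed
  have b: "\<bar>((F \<circ> G) ^^ n) 0 - ((F ^^ n) 0 + (G ^^ n) 0)\<bar> \<le> 1" for n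
    using deg_one_bound_abs[OF deg_one_pow[OF F], of n "(G ^^ n) 0"] p[of n 0] by linarith
  have "(\<lambda>n. (F ^^ n) 0 / real n + (G ^^ n) 0 / real n
      + (((F \<circ> G) ^^ n) 0 - ((F ^^ n) 0 + (G ^^ n) 0)) / real n)
        \<longlonglongrightarrow> transl_num F + transl_num G + 0"
    by (intro tendsto_add transl_num_LIMSEQ F G bounded_div_n_LIMSEQ_0[OF b])
  then have "(\<lambda>n. ((F \<circ> G) ^^ n) 0 / real n) \<longlonglongrightarrow> transl_num F + transl_num G"
    by (simp add: diff_divide_distrib add_divide_distrib)
  then show ?thesis using transl_num_LIMSEQ[OF deg_one_comp[OF F G]] LIMSEQ_unique by blast
qed

lemma is_lift_deg_one: "is_lift f F \<Longrightarrow> deg_one F"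
  by (simp add: is_lift_def deg_one_def strict_mono_mono)

lemma circ_in_S1[simp]: "circ x \<in> S1"
  by (simp add: circ_def S1_def)

lemma is_lift_compose: assumes "is_lift f F" "is_lift h H" shows "is_lift (compose S1 f h) (F \<circ> H)"
proof -
  have c: "continuous_on UNIV F" "continuous_on UNIV H" and s: "surj F" "surj H"
    using assms by (auto simp: is_lift_def)
  have "continuous_on UNIV (F \<circ> H)"
    by (rule continuous_on_compose[OF c(2)]) (simp add: s c)
  moreover have "surj (F \<circ> H)" by (rule comp_surj[OF s(2) s(1)])
  moreover have "strict_mono (F \<circ> H)" using assms by (auto simp: is_lift_def strict_mono_def)
  ultimately show ?thesis using assms by (auto simp: is_lift_def compose_def)
qed

lemma cis_eq_imp_2pi_multiple: assumes "cis a = cis b" shows "\<exists>n::int. a = b + of_int (2 * n) * pi"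
proof -
  have "exp (\<i> * complex_of_real a) = exp (\<i> * complex_of_real b)" using assms
    by (simp add: cis_conv_exp)
  then obtain n :: int where "\<i> * complex_of_real a = \<i> * complex_of_real b + (of_int (2 * n) * pi) * \<i>"
    by (auto simp: exp_eq)
  then have "complex_of_real a = complex_of_real (b + of_int (2 * n) * pi)"
    by (simp add: algebra_simps) (metis mult.commute mult_cancel_left complex_i_not_zero distrib_left)
  then show ?thesis by (intro exI[of _ n]) (simp only: of_real_eq_iff)
qed

lemma is_lift_unique: assumes F: "is_lift f F" and F': "is_lift f F'"
  shows "\<exists>m::int. \<forall>x. F' x = F x + of_int m"
proof -
  have int: "F' x - F x \<in> \<int>" for x
  proof -
    have "cis (2 * pi * F' x) = cis (2 * pi * F x)"
      using F F' by (auto simp: is_lift_def circ_def)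
    then obtain n :: int where "2 * pi * F' x = 2 * pi * F x + of_int (2 * n) * pi"
      using cis_eq_imp_2pi_multiple by blast
    then have "2 * pi * (F' x - F x - of_int n) = 0" by (simp add: algebra_simps)
    then have "F' x - F x = of_int n" by simp
    then show ?thesis by simp
  qed
  have "(\<lambda>x. F' x - F x) constant_on UNIV"
  proof (rule continuous_discrete_range_constant)
    show "connected (UNIV :: real set)" by simp
    show "continuous_on UNIV (\<lambda>x. F' x - F x)"
      using F F' by (intro continuous_intros) (auto simp: is_lift_def)
    fix x :: real
    show "\<exists>e>0. \<forall>y. y \<in> UNIV \<and> F' y - F y \<noteq> F' x - F x \<longrightarrow> e \<le> norm (F' y - F y - (F' x - F x))"
    proof (intro exI[of _ 1] conjI allI impI)
      fix y assume "y \<in> UNIV \<and> F' y - F y \<noteq> F' x - F x"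
      moreover obtain a b where "F' y - F y = of_int a" "F' x - F x = of_int b"
        using int[of y] int[of x] by (metis Ints_cases)
      ultimately show "1 \<le> norm (F' y - F y - (F' x - F x))" by auto
    qed simp
  qed
  then obtain c where c: "\<And>x. F' x - F x = c" by (auto simp: constant_on_def)
  obtain m where "c = of_int m" using int[of 0] c[of 0] by (metis Ints_cases)
  then show ?thesis using c by (intro exI[of _ m]) (auto simp: algebra_simps)
qed

lemma rot_eq_0_if_transl_num_int: assumes F: "is_lift f F" and i: "transl_num F = of_int m"
  shows "rot f = 0"
proof -
  let ?F = "SOME F. is_lift f F"
  have F0: "is_lift f ?F" using F by (rule someI[where P="is_lift f"])
  obtain k :: int where k: "\<And>x. ?F x = F x + of_int k" using is_lift_unique[OF F F0] by blast
  have "?F = (\<lambda>x. F x + of_int k)" using k by auto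
  then have "transl_num ?F = of_int (m + k)" using transl_num_shift[OF is_lift_deg_one[OF F]] i
    by simp
  then show ?thesis by (simp add: rot_def transl_num_def[symmetric] Let_def)
qed

lemma rot_eq_0_if_commuting_product_conj:
  assumes h: "h \<in> homeo_plus" and t: "t \<in> homeo_plus" and z: "z \<in> homeo_plus"
    and e1: "compose S1 z t = compose S1 (compose S1 h t) z"
    and e2: "compose S1 h t = compose S1 t h"
  shows "rot h = 0"
proof -
  obtain H where H: "is_lift h H" using h by (auto simp: homeo_plus_def)
  obtain Tt where Tt: "is_lift t Tt" using t by (auto simp: homeo_plus_def)
  obtain Zt where Zt: "is_lift z Zt" using z by (auto simp: homeo_plus_def)
  have lH: "deg_one H" and lT: "deg_one Tt" and lZ: "deg_one Zt" using H Tt Zt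
    by (simp_all add: is_lift_deg_one)
  have l1: "is_lift (compose S1 z t) (Zt \<circ> Tt)" by (rule is_lift_compose[OF Zt Tt])
  have l2: "is_lift (compose S1 z t) ((H \<circ> Tt) \<circ> Zt)" unfolding e1
    by (intro is_lift_compose H Tt Zt)
  obtain m :: int where m: "\<And>x. H (Tt (Zt x)) = Zt (Tt x) + of_int m"
    using is_lift_unique[OF l1 l2] by auto
  have "transl_num Tt = transl_num (\<lambda>x. (H \<circ> Tt) x + of_int (- m))"
    by (rule transl_num_conj[OF lT lZ deg_one_shift[OF deg_one_comp[OF lH lT]]]) (simp add: m)
  also have "\<dots> = transl_num (H \<circ> Tt) - of_int m"
    using transl_num_shift[OF deg_one_comp[OF lH lT], of "- m"]
    by simp
  finally have A: "transl_num Tt = transl_num (H \<circ> Tt) - of_int m" .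
  have l3: "is_lift (compose S1 h t) (H \<circ> Tt)" by (rule is_lift_compose[OF H Tt])
  have l4: "is_lift (compose S1 h t) (Tt \<circ> H)" unfolding e2 by (rule is_lift_compose[OF Tt H])
  obtain m' :: int where m': "\<And>x. Tt (H x) = H (Tt x) + of_int m'"
    using is_lift_unique[OF l3 l4] by auto
  have "transl_num Tt = transl_num (\<lambda>x. Tt x + of_int (- m'))"
    by (rule transl_num_conj[OF lT lH deg_one_shift[OF lT]]) (simp add: m')
  also have "\<dots> = transl_num Tt - of_int m'" using transl_num_shift[OF lT, of "- m'"] by simp
  finally have "m' = 0" by simp
  then have "transl_num (H \<circ> Tt) = transl_num H + transl_num Tt" using m'
    by (intro transl_num_comp_commuting[OF lH lT]) simp
  then have "transl_num H = of_int m" using A by simp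
  then show ?thesis by (rule rot_eq_0_if_transl_num_int[OF H])
qed

lemma mult_AutPlus: "x \<in> aut_plus g \<Longrightarrow> y \<in> aut_plus g \<Longrightarrow>
  x \<otimes>\<^bsub>AutPlus g\<^esub> y = compose (carrier (SG g)) x y"
  by (simp add: AutPlus_def BijGroup_def aut_plus_def auto_def)

lemma mult_HomeoPlus: "f \<in> homeo_plus \<Longrightarrow> h \<in> homeo_plus \<Longrightarrow> f \<otimes>\<^bsub>HomeoPlus\<^esub> h = compose S1 f h"
  by (simp add: HomeoPlus_def BijGroup_def homeo_plus_def)

lemma hom_AutPlus_HomeoPlus_closed:
  "\<rho> \<in> hom (AutPlus g) HomeoPlus \<Longrightarrow> x \<in> aut_plus g \<Longrightarrow> \<rho> x \<in> homeo_plus"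
  by (auto simp: hom_def AutPlus_def HomeoPlus_def)

lemma hom_AutPlus_HomeoPlus_compose:
  assumes "\<rho> \<in> hom (AutPlus g) HomeoPlus" "x \<in> aut_plus g" "y \<in> aut_plus g"
  shows "\<rho> (compose (carrier (SG g)) x y) = compose S1 (\<rho> x) (\<rho> y)"
proof -
  have "\<rho> (x \<otimes>\<^bsub>AutPlus g\<^esub> y) = \<rho> x \<otimes>\<^bsub>HomeoPlus\<^esub> \<rho> y"
    using assms by (simp add: hom_def AutPlus_def)
  then show ?thesis
    using assms by (simp add: mult_AutPlus mult_HomeoPlus hom_AutPlus_HomeoPlus_closed)
qed

theorem lemma2p1:
  fixes g :: nat and \<rho> :: "(sword set \<Rightarrow> sword set) \<Rightarrow> (complex \<Rightarrow> complex)"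
    and a :: "sword set"
  assumes "g \<ge> 2"
    and "\<rho> \<in> hom (AutPlus g) HomeoPlus"
    and "a \<in> nonsep_scc g"
  shows "rot (\<rho> (inner_aut g a)) = 0"
proof -
  let ?C = "carrier (SG g)"
  have g: "0 < g" using assms(1) by simp
  obtain T w where T: "T \<in> aut_plus g" and w: "w \<in> ?C"
    and Ta: "T a = a" and Tw: "T w = inv\<^bsub>SG g\<^esub> a \<otimes>\<^bsub>SG g\<^esub> w"
    using nonsep_scc_twist[OF g assms(3)] by blast
  have a: "a \<in> ?C" using nonsep_scc_subset_carrier[OF g] assms(3) by blast
  have T_hom: "T \<in> hom (SG g) (SG g)" using T by (simp add: aut_plus_def auto_def)
  define I where "I = inner_aut g a"
  define Z where "Z = inner_aut g w"
  have I: "I \<in> aut_plus g" and Z: "Z \<in> aut_plus g"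
    using a w by (simp_all add: I_def Z_def inner_aut_plus)
  have commute: "compose ?C I T = compose ?C T I"
    unfolding I_def by (rule inner_aut_commute_if_fixed[OF T_hom a Ta])
  have conj: "compose ?C Z T = compose ?C (compose ?C I T) Z"
    unfolding I_def Z_def by (rule inner_aut_conj_if_shifted[OF T_hom a w Tw])
  note rho_closed = hom_AutPlus_HomeoPlus_closed[OF assms(2)]
    and rho_compose = hom_AutPlus_HomeoPlus_compose[OF assms(2), symmetric]
  show ?thesis unfolding I_def[symmetric]
  proof (rule rot_eq_0_if_commuting_product_conj)
    show "\<rho> I \<in> homeo_plus" "\<rho> T \<in> homeo_plus" "\<rho> Z \<in> homeo_plus"
      using I T Z by (simp_all add: rho_closed)
    show "compose S1 (\<rho> I) (\<rho> T) = compose S1 (\<rho> T) (\<rho> I)"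
      using commute I T by (simp add: rho_compose)
    show "compose S1 (\<rho> Z) (\<rho> T) = compose S1 (compose S1 (\<rho> I) (\<rho> T)) (\<rho> Z)"
      using conj I T Z aut_plus_compose[OF I T] by (simp add: rho_compose)
  qed
qed

end
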